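(* Fix $\varepsilon\in(0,1)$ and let $\mathbf g=(g_1,g_2)$ be the flux carrier. For any $w\in H^1(\Omega_{a,b})$ with $w=0$ on the upper boundary $S_{2;a,b}=\{x\in\partial\Omega: x_2=f_2(x_1),\ a<x_1<b\}$, $$\int_{\Omega_{a,b}}g_1^2w^2\,dx\le C\Phi^2\varepsilon^2\int_{\Omega_{a,b}}|\partial_{x_2}w|^2\,dx.$$ Moreover, if $\gamma:=\max_{i=1,2}\sup_{x_1\in\mathbb{R}}|f_i''(x_1)f(x_1)|<\infty$, then $$|\mathbf g|\le\frac{C(\varepsilon)\Phi}{f(x_1)},\qquad|\nabla\mathbf g|\le\frac{C(\varepsilon,\gamma)\Phi}{f^2(x_1)},\qquad\int_{\Omega_{a,b}}|\nabla\mathbf g|^2+|\mathbf g|^4\,dx\le C(\varepsilon,\gamma)(\Phi^2+\Phi^4)\int_a^bf^{-3}(x_1)\,dx_1,$$ where $C(\varepsilon)$ depends on $\varepsilon$ and $C(\varepsilon,\gamma)$ on $\varepsilon$ and $\gamma$.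
   Context: $\Omega=\{(x_1,x_2):x_1\in\mathbb{R},\ f_1(x_1)<x_2<f_2(x_1)\}$ with $f_1,f_2$ smooth, $f=f_2-f_1$, $\bar f=(f_1+f_2)/2$, $\inf f=d>0$, $\max_i\|f_i'\|_{C(\mathbb{R})}=\beta<\infty$; $\Phi\ge0$; $a<b$, $\Omega_{a,b}=\{x\in\Omega:a<x_1<b\}$. Flux carrier: fix $\mu\in C^\infty(\mathbb{R})$ with $\mu(t)=0$ for $t\ge1$, $\mu(t)=1$ for $t\le0$; set $G(x)=\Phi\,\mu\big(1+\varepsilon\ln\frac{f_2(x_1)-x_2}{x_2-\bar f(x_1)}\big)$ if $x_2>\bar f(x_1)$, $G(x)=0$ if $x_2\le\bar f(x_1)$, and $\mathbf g=(g_1,g_2)=(\partial_{x_2}G,-\partial_{x_1}G)$. The constant $C$ in the first inequality does not depend on $\varepsilon$, $\Phi$, $a$, $b$. *)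

theory Defs
  imports "HOL-Analysis.Analysis"
begin

definition smooth_fun :: "(real \<Rightarrow> real) \<Rightarrow> bool" where
  "smooth_fun h \<longleftrightarrow> (\<forall>k x. ((deriv ^^ k) h) differentiable (at x))"

definition Omega :: "(real \<Rightarrow> real) \<Rightarrow> (real \<Rightarrow> real) \<Rightarrow> (real \<times> real) set" where
  "Omega f1 f2 = {x. f1 (fst x) < snd x \<and> snd x < f2 (fst x)}"

definition Omega_ab :: "(real \<Rightarrow> real) \<Rightarrow> (real \<Rightarrow> real) \<Rightarrow> real \<Rightarrow> real \<Rightarrow> (real \<times> real) set" where
  "Omega_ab f1 f2 a b = {x \<in> Omega f1 f2. a < fst x \<and> fst x < b}"

definition S2_ab :: "(real \<Rightarrow> real) \<Rightarrow> real \<Rightarrow> real \<Rightarrow> (real \<times> real) set" where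
  "S2_ab f2 a b = {(t, f2 t) | t. a < t \<and> t < b}"

definition C1_with_grad :: "(real \<times> real \<Rightarrow> real) \<Rightarrow> (real \<times> real \<Rightarrow> real) \<Rightarrow> (real \<times> real \<Rightarrow> real) \<Rightarrow> bool" where
  "C1_with_grad \<phi> p1 p2 \<longleftrightarrow> continuous_on UNIV p1 \<and> continuous_on UNIV p2 \<and>
     (\<forall>x. (\<phi> has_derivative (\<lambda>h. p1 x * fst h + p2 x * snd h)) (at x))"

definition sqint :: "(real \<times> real) set \<Rightarrow> (real \<times> real \<Rightarrow> real) \<Rightarrow> ennreal" where
  "sqint U u = (\<integral>\<^sup>+ x. indicator U x * ennreal ((u x)\<^sup>2) \<partial>lebesgue)"

definition H1_weak :: "(real \<times> real) set \<Rightarrow> (real \<times> real \<Rightarrow> real) \<Rightarrow> (real \<times> real \<Rightarrow> real) \<Rightarrow> (real \<times> real \<Rightarrow> real) \<Rightarrow> bool" where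
  "H1_weak U w v1 v2 \<longleftrightarrow>
     (\<lambda>x. indicator U x * w x) \<in> borel_measurable lebesgue \<and>
     (\<lambda>x. indicator U x * v1 x) \<in> borel_measurable lebesgue \<and>
     (\<lambda>x. indicator U x * v2 x) \<in> borel_measurable lebesgue \<and>
     sqint U w < \<infinity> \<and> sqint U v1 < \<infinity> \<and> sqint U v2 < \<infinity> \<and>
     (\<forall>\<psi> \<psi>1 \<psi>2. C1_with_grad \<psi> \<psi>1 \<psi>2 \<and> compact (closure {x. \<psi> x \<noteq> 0}) \<and>
          closure {x. \<psi> x \<noteq> 0} \<subseteq> U \<longrightarrow>
        (LINT x:U|lebesgue. w x * \<psi>1 x) = - (LINT x:U|lebesgue. v1 x * \<psi> x) \<and>
        (LINT x:U|lebesgue. w x * \<psi>2 x) = - (LINT x:U|lebesgue. v2 x * \<psi> x))"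

(* "w = 0 on S" in the trace sense: w is the H^1(U)-limit of C^1(R^2) functions vanishing on S *)
definition zero_trace_on :: "(real \<times> real) set \<Rightarrow> (real \<times> real) set \<Rightarrow> (real \<times> real \<Rightarrow> real) \<Rightarrow> (real \<times> real \<Rightarrow> real) \<Rightarrow> (real \<times> real \<Rightarrow> real) \<Rightarrow> bool" where
  "zero_trace_on U S w v1 v2 \<longleftrightarrow>
     (\<exists>\<phi> p1 p2. (\<forall>n. C1_with_grad (\<phi> n) (p1 n) (p2 n) \<and> (\<forall>x\<in>S. \<phi> n x = 0)) \<and>
        ((\<lambda>n. sqint U (\<lambda>x. \<phi> n x - w x)) \<longlonglongrightarrow> 0) \<and>
        ((\<lambda>n. sqint U (\<lambda>x. p1 n x - v1 x)) \<longlonglongrightarrow> 0) \<and>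
        ((\<lambda>n. sqint U (\<lambda>x. p2 n x - v2 x)) \<longlonglongrightarrow> 0))"

definition fluxG :: "(real \<Rightarrow> real) \<Rightarrow> (real \<Rightarrow> real) \<Rightarrow> (real \<Rightarrow> real) \<Rightarrow> real \<Rightarrow> real \<Rightarrow> real \<times> real \<Rightarrow> real" where
  "fluxG f1 f2 \<mu> \<epsilon> \<Phi> x =
     (let fb = (f1 (fst x) + f2 (fst x)) / 2 in
      if snd x > fb then \<Phi> * \<mu> (1 + \<epsilon> * ln ((f2 (fst x) - snd x) / (snd x - fb))) else 0)"

definition flux_g1 :: "(real \<Rightarrow> real) \<Rightarrow> (real \<Rightarrow> real) \<Rightarrow> (real \<Rightarrow> real) \<Rightarrow> real \<Rightarrow> real \<Rightarrow> real \<times> real \<Rightarrow> real" where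
  "flux_g1 f1 f2 \<mu> \<epsilon> \<Phi> x = deriv (\<lambda>t. fluxG f1 f2 \<mu> \<epsilon> \<Phi> (fst x, t)) (snd x)"

definition flux_g2 :: "(real \<Rightarrow> real) \<Rightarrow> (real \<Rightarrow> real) \<Rightarrow> (real \<Rightarrow> real) \<Rightarrow> real \<Rightarrow> real \<Rightarrow> real \<times> real \<Rightarrow> real" where
  "flux_g2 f1 f2 \<mu> \<epsilon> \<Phi> x = - deriv (\<lambda>t. fluxG f1 f2 \<mu> \<epsilon> \<Phi> (t, snd x)) (fst x)"

definition pd1 :: "(real \<times> real \<Rightarrow> real) \<Rightarrow> real \<times> real \<Rightarrow> real" where
  "pd1 u x = deriv (\<lambda>t. u (t, snd x)) (fst x)"

definition pd2 :: "(real \<times> real \<Rightarrow> real) \<Rightarrow> real \<times> real \<Rightarrow> real" where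
  "pd2 u x = deriv (\<lambda>t. u (fst x, t)) (snd x)"

definition flux_norm :: "(real \<Rightarrow> real) \<Rightarrow> (real \<Rightarrow> real) \<Rightarrow> (real \<Rightarrow> real) \<Rightarrow> real \<Rightarrow> real \<Rightarrow> real \<times> real \<Rightarrow> real" where
  "flux_norm f1 f2 \<mu> \<epsilon> \<Phi> x =
     sqrt ((flux_g1 f1 f2 \<mu> \<epsilon> \<Phi> x)\<^sup>2 + (flux_g2 f1 f2 \<mu> \<epsilon> \<Phi> x)\<^sup>2)"

definition flux_grad_norm :: "(real \<Rightarrow> real) \<Rightarrow> (real \<Rightarrow> real) \<Rightarrow> (real \<Rightarrow> real) \<Rightarrow> real \<Rightarrow> real \<Rightarrow> real \<times> real \<Rightarrow> real" where
  "flux_grad_norm f1 f2 \<mu> \<epsilon> \<Phi> x =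
     sqrt ((pd1 (flux_g1 f1 f2 \<mu> \<epsilon> \<Phi>) x)\<^sup>2 + (pd2 (flux_g1 f1 f2 \<mu> \<epsilon> \<Phi>) x)\<^sup>2 +
           (pd1 (flux_g2 f1 f2 \<mu> \<epsilon> \<Phi>) x)\<^sup>2 + (pd2 (flux_g2 f1 f2 \<mu> \<epsilon> \<Phi>) x)\<^sup>2)"

end

theory Submission
  imports Defs
begin

(*
  Write p = f2(x1) - x2 for the distance to the upper wall and q = x2 - (f1(x1) + f2(x1))/2 for the
  height above the midline, so that G = Phi mu(s) with s = 1 + eps ln (p / q) where q > 0, and G
  vanishes near every point where q <= 0 or s > 1.  Hence all derivatives of G live where
  0 <= s <= 1, i.e. exp(-1/eps) q <= p <= q, and since p + q = f/2 both p and q are there at least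
  exp(-1/eps) f / 4.

  Differentiating, g1 = Phi eps mu'(s) (-1/p - 1/q), so |g1| <= 2 Phi eps sup|mu'| / p.  The weighted
  estimate then follows from the one-dimensional Hardy inequality  int u^2 / (h - y)^2 <= 4 int u'^2
  for u(h) = 0, applied on every vertical segment to the smooth approximations of w that vanish on
  the upper wall, and a passage to the limit.

  For the second part, each term of g and of its derivatives is a product of bounded factors
  (mu', mu'', f_i', and f_i'' f) with one resp. two factors 1/p, 1/q, 1/f, which gives
  |g| <= C Phi / f and |grad g| <= C Phi / f^2; integrating f^-4 over a vertical segment of
  length f leaves f^-3.
*)

section \<open>Hardy's inequality\<close>

lemma indicator_mult_ennreal: "(\<lambda>x. indicator A x * ennreal (f x)) = (\<lambda>x. ennreal (indicator A x * f x))"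
  by (simp add: fun_eq_iff split: split_indicator)

(* For a = u y, b = u' y and z = h - y, the fraction is the derivative of u^2 / (h - y); the two
   sides differ by the square (a / z + 2 b)^2. *)

lemma hardy_square_estimate:
  fixes a b z :: real
  assumes "z \<noteq> 0"
  shows "(a / z)\<^sup>2 \<le> 2 * ((2 * a * b * z + a\<^sup>2) / z\<^sup>2) + 4 * b\<^sup>2"
proof -
  have "2 * ((2 * a * b * z + a\<^sup>2) / z\<^sup>2) + 4 * b\<^sup>2 - (a / z)\<^sup>2 = (a / z + 2 * b)\<^sup>2"
    using assms by (simp add: field_simps power2_eq_square)
  then show ?thesis
    by (metis diff_ge_0_iff_ge zero_le_power2)
qed

lemma hardy_inequality_Icc:
  fixes u u' :: "real \<Rightarrow> real"
  assumes "c \<le> e" "e < h"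
    and u': "\<And>y. c \<le> y \<Longrightarrow> y \<le> e \<Longrightarrow> (u has_real_derivative u' y) (at y)"
    and cont: "continuous_on {c..e} u'"
  shows "integral {c..e} (\<lambda>y. (u y / (h - y))\<^sup>2) \<le> 2 * (u e)\<^sup>2 / (h - e) + 4 * integral {c..e} (\<lambda>y. (u' y)\<^sup>2)"
proof -
  define v where "v y = (u y)\<^sup>2 / (h - y)" for y
  define v' where "v' y = (2 * u y * u' y * (h - y) + (u y)\<^sup>2) / (h - y)\<^sup>2" for y
  have "(v has_real_derivative v' y) (at y within {c..e})" if "y \<in> {c..e}" for y
  proof -
    have "h - y \<noteq> 0" using that \<open>e < h\<close> by auto
    moreover note u'[THEN has_field_derivative_at_within, of y "{c..e}"]
    ultimately show ?thesis
      using that unfolding v_def v'_def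
      by (auto intro!: derivative_eq_intros simp: power2_eq_square)
  qed
  then have v_int: "(v' has_integral v e - v c) {c..e}"
    by (intro fundamental_theorem_of_calculus[OF \<open>c \<le> e\<close>])
      (simp add: has_real_derivative_iff_has_vector_derivative)
  have "continuous_on {c..e} u"
    by (intro continuous_at_imp_continuous_on ballI DERIV_isCont[OF u']) auto
  then have lhs_int: "(\<lambda>y. (u y / (h - y))\<^sup>2) integrable_on {c..e}"
    using \<open>e < h\<close> by (intro integrable_continuous_interval continuous_intros) auto
  have u'_int: "(\<lambda>y. (u' y)\<^sup>2) integrable_on {c..e}"
    by (intro integrable_continuous_interval continuous_intros cont)
  have "(u y / (h - y))\<^sup>2 \<le> 2 * v' y + 4 * (u' y)\<^sup>2" if "y \<in> {c..e}" for y
    unfolding v'_def using that \<open>e < h\<close> by (intro hardy_square_estimate) auto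
  moreover have "((\<lambda>y. 2 * v' y + 4 * (u' y)\<^sup>2) has_integral
      2 * (v e - v c) + 4 * integral {c..e} (\<lambda>y. (u' y)\<^sup>2)) {c..e}"
    by (intro has_integral_add has_integral_mult_right v_int integrable_integral u'_int)
  ultimately have "integral {c..e} (\<lambda>y. (u y / (h - y))\<^sup>2)
      \<le> 2 * (v e - v c) + 4 * integral {c..e} (\<lambda>y. (u' y)\<^sup>2)"
    using lhs_int by (intro has_integral_le[OF integrable_integral]) auto
  also have "\<dots> \<le> 2 * (u e)\<^sup>2 / (h - e) + 4 * integral {c..e} (\<lambda>y. (u' y)\<^sup>2)"
    using \<open>c \<le> e\<close> \<open>e < h\<close> unfolding v_def by simp
  finally show ?thesis .
qed

lemma hardy_inequality_Icc_vanishing: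
  fixes u u' :: "real \<Rightarrow> real"
  assumes "c \<le> e" "e < h"
    and u': "\<And>y. c \<le> y \<Longrightarrow> y \<le> h \<Longrightarrow> (u has_real_derivative u' y) (at y)"
    and cont: "continuous_on {c..h} u'" and "u h = 0"
    and M: "\<And>y. y \<in> {c..h} \<Longrightarrow> \<bar>u' y\<bar> \<le> M"
  shows "(\<integral>\<^sup>+y. indicator {c..e} y * ennreal ((u y / (h - y))\<^sup>2) \<partial>lborel)
    \<le> ennreal (2 * M\<^sup>2 * (h - e)) + 4 * (\<integral>\<^sup>+y. indicator {c<..<h} y * ennreal ((u' y)\<^sup>2) \<partial>lborel)"
proof -
  have cont_e: "continuous_on {c..e} u'"
    using cont by (rule continuous_on_subset) (use \<open>e < h\<close> in auto)
  obtain z where z: "e < z" "z < h" "u h - u e = (h - e) * u' z"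
    using MVT2[OF \<open>e < h\<close>, of u u'] u' \<open>c \<le> e\<close> by force
  have "\<bar>u e\<bar> = (h - e) * \<bar>u' z\<bar>"
    using z(3) \<open>u h = 0\<close> \<open>e < h\<close> by (metis abs_minus_cancel abs_mult abs_of_pos diff_0 diff_gt_0_iff_gt)
  also have "\<dots> \<le> (h - e) * M"
    using z M[of z] \<open>c \<le> e\<close> \<open>e < h\<close> by (intro mult_left_mono) auto
  finally have "\<bar>u e\<bar> \<le> (h - e) * M" .
  then have "(u e)\<^sup>2 \<le> ((h - e) * M)\<^sup>2"
    by (metis abs_ge_zero order_trans power2_abs power_mono)
  then have end_term: "2 * (u e)\<^sup>2 / (h - e) \<le> 2 * M\<^sup>2 * (h - e)"
    using \<open>e < h\<close> by (simp add: field_simps power2_eq_square)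
  have u'_int: "(\<lambda>y. (u' y)\<^sup>2) integrable_on {c..e}"
    by (intro integrable_continuous_interval continuous_intros cont_e)
  have lhs_int: "(\<lambda>y. (u y / (h - y))\<^sup>2) integrable_on {c..e}"
    using \<open>e < h\<close>
    by (intro integrable_continuous_interval continuous_intros continuous_at_imp_continuous_on
        ballI DERIV_isCont[OF u']) auto
  have "(\<integral>\<^sup>+y. indicator {c..e} y * ennreal ((u y / (h - y))\<^sup>2) \<partial>lborel)
      = ennreal (integral {c..e} (\<lambda>y. (u y / (h - y))\<^sup>2))"
    unfolding indicator_mult_ennreal
    by (intro nn_integral_has_integral_lebesgue integrable_integral lhs_int) auto
  also have "\<dots> \<le> ennreal (2 * M\<^sup>2 * (h - e) + 4 * integral {c..e} (\<lambda>y. (u' y)\<^sup>2))"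
    using hardy_inequality_Icc[OF \<open>c \<le> e\<close> \<open>e < h\<close> u' cont_e] end_term \<open>e < h\<close>
    by (intro ennreal_leI) auto
  also have "\<dots> = ennreal (2 * M\<^sup>2 * (h - e)) + 4 * ennreal (integral {c..e} (\<lambda>y. (u' y)\<^sup>2))"
    using \<open>e < h\<close> integral_nonneg[OF u'_int]
    by (simp add: ennreal_plus ennreal_mult)
  also have "ennreal (integral {c..e} (\<lambda>y. (u' y)\<^sup>2))
      = (\<integral>\<^sup>+y. indicator {c..e} y * ennreal ((u' y)\<^sup>2) \<partial>lborel)"
    unfolding indicator_mult_ennreal
    by (intro nn_integral_has_integral_lebesgue[symmetric] integrable_integral u'_int) auto
  also have "\<dots> \<le> (\<integral>\<^sup>+y. indicator {c<..<h} y * ennreal ((u' y)\<^sup>2) \<partial>lborel)"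
    using AE_lborel_singleton[of c] \<open>e < h\<close>
    by (intro nn_integral_mono_AE) (auto elim!: eventually_mono split: split_indicator)
  finally show ?thesis by (simp add: mult_left_mono add_left_mono)
qed

lemma nn_integral_Ico_eq_SUP_Icc:
  fixes f :: "real \<Rightarrow> ennreal" and \<eta> :: "nat \<Rightarrow> real"
  assumes \<eta>: "decseq \<eta>" "\<eta> \<longlonglongrightarrow> 0" "\<And>n. 0 < \<eta> n"
    and meas: "\<And>n. (\<lambda>y. indicator {c..h - \<eta> n} y * f y) \<in> borel_measurable borel"
  shows "(\<integral>\<^sup>+y. indicator {c..<h} y * f y \<partial>lborel) = (SUP n. \<integral>\<^sup>+y. indicator {c..h - \<eta> n} y * f y \<partial>lborel)"
proof -
  have inc: "incseq (\<lambda>n y. indicator {c..h - \<eta> n} y * f y)"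
  proof (intro incseq_SucI le_funI)
    fix n y
    have "{c..h - \<eta> n} \<subseteq> {c..h - \<eta> (Suc n)}"
      using \<eta>(1) by (auto simp: decseq_Suc_iff)
    then show "indicator {c..h - \<eta> n} y * f y \<le> indicator {c..h - \<eta> (Suc n)} y * f y"
      by (auto split: split_indicator)
  qed
  have sup: "(SUP n. indicator {c..h - \<eta> n} y * f y) = indicator {c..<h} y * f y" for y
  proof (cases "c \<le> y \<and> y < h")
    case True
    then obtain n where "\<eta> n < h - y"
      using order_tendstoD(2)[OF \<eta>(2), of "h - y"] by (auto dest: eventually_happens)
    then have "indicator {c..h - \<eta> n} y * f y = indicator {c..<h} y * f y"
      using True by simp
    moreover have "indicator {c..h - \<eta> m} y * f y \<le> indicator {c..<h} y * f y" for m
      using \<eta>(3)[of m] by (auto split: split_indicator)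
    ultimately show ?thesis
      by (intro antisym SUP_least SUP_upper2[of n]) auto
  next
    case False
    then have "indicator {c..h - \<eta> n} y = (0::ennreal)" for n
      using \<eta>(3)[of n] by auto
    then show ?thesis using False by simp
  qed
  have "(\<integral>\<^sup>+y. indicator {c..<h} y * f y \<partial>lborel)
      = (\<integral>\<^sup>+y. (SUP n. indicator {c..h - \<eta> n} y * f y) \<partial>lborel)"
    by (simp add: sup)
  also have "\<dots> = (SUP n. \<integral>\<^sup>+y. indicator {c..h - \<eta> n} y * f y \<partial>lborel)"
    using inc meas by (intro nn_integral_monotone_convergence_SUP) auto
  finally show ?thesis .
qed

lemma nn_integral_Ico_le_of_Icc:
  fixes f :: "real \<Rightarrow> ennreal"
  assumes "c < h"
    and meas: "\<And>e. e < h \<Longrightarrow> (\<lambda>y. indicator {c..e} y * f y) \<in> borel_measurable borel"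
    and bound: "\<And>e. c \<le> e \<Longrightarrow> e < h \<Longrightarrow> (\<integral>\<^sup>+y. indicator {c..e} y * f y \<partial>lborel) \<le> ennreal (K * (h - e)) + J"
  shows "(\<integral>\<^sup>+y. indicator {c..<h} y * f y \<partial>lborel) \<le> J"
proof -
  define \<eta> where "\<eta> n = (h - c) / real (Suc (Suc n))" for n
  define I where "I n = (\<integral>\<^sup>+y. indicator {c..h - \<eta> n} y * f y \<partial>lborel)" for n
  have \<eta>_pos: "0 < \<eta> n" for n
    using \<open>c < h\<close> by (simp add: \<eta>_def)
  have \<eta>_le: "\<eta> n \<le> h - c" for n
    using \<open>c < h\<close> mult_right_mono[of c h "real n"] by (simp add: \<eta>_def field_simps)
  have \<eta>_dec: "decseq \<eta>"
    using \<open>c < h\<close> by (intro decseq_SucI) (simp add: \<eta>_def frac_le)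
  have \<eta>_lim: "\<eta> \<longlonglongrightarrow> 0"
    unfolding \<eta>_def
    by (intro tendsto_divide_0[OF tendsto_const] filterlim_at_top_imp_at_infinity
        filterlim_compose[OF filterlim_real_sequentially] filterlim_Suc filterlim_compose[OF filterlim_Suc])
  have "I n \<le> ennreal (K * \<eta> n) + J" for n
    using bound[of "h - \<eta> n"] \<eta>_pos[of n] \<eta>_le[of n] unfolding I_def by simp
  moreover have "(\<lambda>n. ennreal (K * \<eta> n) + J) \<longlonglongrightarrow> ennreal (K * 0) + J"
    by (intro tendsto_intros \<eta>_lim)
  moreover have "I \<longlonglongrightarrow> (SUP n. I n)"
  proof (unfold I_def, intro LIMSEQ_SUP incseq_SucI nn_integral_mono mult_right_mono)
    show "indicator {c..h - \<eta> n} y \<le> (indicator {c..h - \<eta> (Suc n)} y :: ennreal)" for n y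
      using \<eta>_dec[unfolded decseq_Suc_iff, rule_format, of n] by (auto split: split_indicator)
  qed auto
  ultimately have "(SUP n. I n) \<le> J"
    by (metis (no_types, lifting) LIMSEQ_le add_0 ennreal_0 mult_zero_right)
  then show ?thesis
    unfolding I_def using \<eta>_pos meas by (subst nn_integral_Ico_eq_SUP_Icc[OF \<eta>_dec \<eta>_lim]) auto
qed

lemma hardy_inequality:
  fixes u u' :: "real \<Rightarrow> real"
  assumes "c < h"
    and u': "\<And>y. c \<le> y \<Longrightarrow> y \<le> h \<Longrightarrow> (u has_real_derivative u' y) (at y)"
    and cont: "continuous_on {c..h} u'" and "u h = 0"
  shows "(\<integral>\<^sup>+y. indicator {c<..<h} y * ennreal ((u y / (h - y))\<^sup>2) \<partial>lborel)
    \<le> 4 * (\<integral>\<^sup>+y. indicator {c<..<h} y * ennreal ((u' y)\<^sup>2) \<partial>lborel)"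
proof -
  obtain M where M: "\<And>y. y \<in> {c..h} \<Longrightarrow> \<bar>u' y\<bar> \<le> M"
    using compact_imp_bounded[OF compact_continuous_image[OF cont compact_Icc]]
    unfolding bounded_iff by fastforce
  have meas: "(\<lambda>y. indicator {c..e} y * ennreal ((u y / (h - y))\<^sup>2)) \<in> borel_measurable borel"
    if "e < h" for e
  proof -
    have "continuous_on {c..e} (\<lambda>y. (u y / (h - y))\<^sup>2)"
      using that by (intro continuous_intros continuous_at_imp_continuous_on ballI DERIV_isCont[OF u']) auto
    from borel_measurable_continuous_on_indicator[OF _ this] show ?thesis
      unfolding indicator_mult_ennreal by simp
  qed
  have "(\<integral>\<^sup>+y. indicator {c<..<h} y * ennreal ((u y / (h - y))\<^sup>2) \<partial>lborel)
      \<le> (\<integral>\<^sup>+y. indicator {c..<h} y * ennreal ((u y / (h - y))\<^sup>2) \<partial>lborel)"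
    by (intro nn_integral_mono) (auto split: split_indicator)
  also have "\<dots> \<le> 4 * (\<integral>\<^sup>+y. indicator {c<..<h} y * ennreal ((u' y)\<^sup>2) \<partial>lborel)"
    using hardy_inequality_Icc_vanishing[OF _ _ u' cont \<open>u h = 0\<close> M]
    by (intro nn_integral_Ico_le_of_Icc[OF \<open>c < h\<close> meas]) auto
  finally show ?thesis .
qed

lemma smooth_fun_deriv: "smooth_fun h \<Longrightarrow> smooth_fun (deriv h)"
  unfolding smooth_fun_def by (metis funpow.simps(2) funpow_swap1 o_apply)

lemma smooth_fun_has_real_derivative: "smooth_fun h \<Longrightarrow> (h has_real_derivative deriv h t) (at t)"
  unfolding smooth_fun_def DERIV_deriv_iff_real_differentiable by (metis funpow_0)

lemma deriv_eq_0_if_locally_constant: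
  assumes "open S" "s \<in> S" "\<And>x. x \<in> S \<Longrightarrow> h x = c"
  shows "deriv h s = 0"
  by (rule DERIV_imp_deriv, rule has_field_derivative_transform_within_open[OF DERIV_const assms(1,2)])
    (simp add: assms(3))

lemma pd1_eq_on_open:
  assumes "open W" "x \<in> W" "\<And>y. y \<in> W \<Longrightarrow> f y = g y"
    and "((\<lambda>t. g (t, snd x)) has_real_derivative D) (at (fst x))"
  shows "pd1 f x = D"
proof -
  have "open ((\<lambda>t. (t, snd x)) -` W)"
    using \<open>open W\<close> by (intro continuous_open_vimage) (auto intro!: continuous_intros)
  from has_field_derivative_transform_within_open[OF assms(4) this]
  have "((\<lambda>t. f (t, snd x)) has_real_derivative D) (at (fst x))"
    using assms(2,3) by simp
  then show ?thesis
    unfolding pd1_def by (rule DERIV_imp_deriv)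
qed

lemma pd2_eq_on_open:
  assumes "open W" "x \<in> W" "\<And>y. y \<in> W \<Longrightarrow> f y = g y"
    and "((\<lambda>t. g (fst x, t)) has_real_derivative D) (at (snd x))"
  shows "pd2 f x = D"
proof -
  have "open ((\<lambda>t. (fst x, t)) -` W)"
    using \<open>open W\<close> by (intro continuous_open_vimage) (auto intro!: continuous_intros)
  from has_field_derivative_transform_within_open[OF assms(4) this]
  have "((\<lambda>t. f (fst x, t)) has_real_derivative D) (at (snd x))"
    using assms(2,3) by simp
  then show ?thesis
    unfolding pd2_def by (rule DERIV_imp_deriv)
qed

lemma flux_g_eq_pd:
  "flux_g1 f1 f2 \<mu> \<epsilon> \<Phi> = pd2 (fluxG f1 f2 \<mu> \<epsilon> \<Phi>)"
  "flux_g2 f1 f2 \<mu> \<epsilon> \<Phi> = (\<lambda>x. - pd1 (fluxG f1 f2 \<mu> \<epsilon> \<Phi>) x)"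
  by (simp_all add: fun_eq_iff flux_g1_def flux_g2_def pd1_def pd2_def)

lemma C1_with_grad_continuous: "C1_with_grad \<phi> p1 p2 \<Longrightarrow> continuous_on UNIV \<phi>"
  unfolding C1_with_grad_def
  by (intro continuous_at_imp_continuous_on) (auto intro: has_derivative_continuous)

lemma C1_with_grad_has_real_derivative_snd:
  assumes "C1_with_grad \<phi> p1 p2"
  shows "((\<lambda>y. \<phi> (t, y)) has_real_derivative p2 (t, y)) (at y)"
proof -
  have "((\<lambda>y. (t, y)) has_derivative (\<lambda>h. (0, h))) (at y)"
    by (auto intro!: derivative_eq_intros)
  moreover have "(\<phi> has_derivative (\<lambda>h. p1 (t, y) * fst h + p2 (t, y) * snd h)) (at (t, y))"
    using assms unfolding C1_with_grad_def by blast
  ultimately have "((\<lambda>y. \<phi> (t, y)) has_derivative (*) (p2 (t, y))) (at y)"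
    using has_derivative_compose by fastforce
  then show ?thesis
    by (simp add: has_field_derivative_def)
qed

lemma nn_integral_lebesgue_pair:
  fixes h :: "real \<times> real \<Rightarrow> ennreal"
  assumes "h \<in> borel_measurable borel"
  shows "(\<integral>\<^sup>+x. h x \<partial>lebesgue) = (\<integral>\<^sup>+x1. (\<integral>\<^sup>+x2. h (x1, x2) \<partial>lborel) \<partial>lborel)"
proof -
  have "(\<integral>\<^sup>+x. h x \<partial>lebesgue) = (\<integral>\<^sup>+x. h x \<partial>(lborel \<Otimes>\<^sub>M lborel))"
    by (simp add: nn_integral_completion lborel_prod)
  also have "\<dots> = (\<integral>\<^sup>+x1. (\<integral>\<^sup>+x2. h (x1, x2) \<partial>lborel) \<partial>lborel)"
    using assms by (intro lborel.nn_integral_fst[symmetric]) (simp add: lborel_prod)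
  finally show ?thesis .
qed

lemma borel_measurable_indicator_mult_ennreal:
  assumes "A \<in> sets borel" "f \<in> borel_measurable borel"
  shows "(\<lambda>x. indicator A x * ennreal (f x)) \<in> borel_measurable borel"
  unfolding indicator_mult_ennreal using assms by measurable

lemma borel_measurable_lebesgueI: "f \<in> borel_measurable borel \<Longrightarrow> f \<in> borel_measurable lebesgue"
  by (rule measurable_completion) simp

lemma lebesgue_measurable_indicator_mult:
  fixes f :: "'a::euclidean_space \<Rightarrow> real"
  assumes "A \<in> sets borel" "f \<in> borel_measurable borel"
  shows "(\<lambda>x. indicator A x * f x) \<in> borel_measurable lebesgue"
  using assms by (intro borel_measurable_lebesgueI borel_measurable_times borel_measurable_indicator)

lemma lebesgue_measurable_indicator_mult_square:
  assumes "(\<lambda>x. indicator A x * f x) \<in> borel_measurable lebesgue"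
  shows "(\<lambda>x. indicator A x * ennreal ((f x)\<^sup>2)) \<in> borel_measurable lebesgue"
proof -
  have "(\<lambda>x. indicator A x * ennreal ((f x)\<^sup>2)) = (\<lambda>x. ennreal ((indicator A x * f x)\<^sup>2))"
    by (simp add: fun_eq_iff split: split_indicator)
  then show ?thesis
    using assms by simp
qed

lemma lebesgue_measurable_indicator_mult_square_diff:
  assumes "(\<lambda>x. indicator A x * f x) \<in> borel_measurable lebesgue"
    and "(\<lambda>x. indicator A x * g x) \<in> borel_measurable lebesgue"
  shows "(\<lambda>x. indicator A x * ennreal ((f x - g x)\<^sup>2)) \<in> borel_measurable lebesgue"
  using lebesgue_measurable_indicator_mult_square[of A "\<lambda>x. f x - g x"] borel_measurable_diff[OF assms]
  by (simp add: right_diff_distrib)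

lemma sqint_le_diff:
  assumes f: "(\<lambda>x. indicator U x * f x) \<in> borel_measurable lebesgue"
    and g: "(\<lambda>x. indicator U x * g x) \<in> borel_measurable lebesgue"
  shows "sqint U f \<le> 2 * sqint U g + 2 * sqint U (\<lambda>x. f x - g x)"
proof -
  note meas = lebesgue_measurable_indicator_mult_square[OF g] lebesgue_measurable_indicator_mult_square_diff[OF f g]
  have "(f x)\<^sup>2 \<le> 2 * (g x)\<^sup>2 + 2 * (f x - g x)\<^sup>2" for x
    using zero_le_power2[of "f x - 2 * g x"] by (simp add: power2_eq_square algebra_simps)
  then have "ennreal ((f x)\<^sup>2) \<le> 2 * ennreal ((g x)\<^sup>2) + 2 * ennreal ((f x - g x)\<^sup>2)" for x
    using ennreal_leI[of "(f x)\<^sup>2" "2 * (g x)\<^sup>2 + 2 * (f x - g x)\<^sup>2"] by (simp add: ennreal_mult)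
  then have "indicator U x * ennreal ((f x)\<^sup>2)
      \<le> 2 * (indicator U x * ennreal ((g x)\<^sup>2)) + 2 * (indicator U x * ennreal ((f x - g x)\<^sup>2))" for x
    by (cases "x \<in> U") (auto simp: distrib_left)
  then have "sqint U f \<le> (\<integral>\<^sup>+x. 2 * (indicator U x * ennreal ((g x)\<^sup>2))
      + 2 * (indicator U x * ennreal ((f x - g x)\<^sup>2)) \<partial>lebesgue)"
    unfolding sqint_def by (intro nn_integral_mono)
  also have "\<dots> = 2 * sqint U g + 2 * sqint U (\<lambda>x. f x - g x)"
    unfolding sqint_def using meas by (simp add: nn_integral_add nn_integral_cmult)
  finally show ?thesis .
qed

lemma weighted_square_le:
  fixes g w \<phi> B c P :: real
  assumes "\<bar>g\<bar> \<le> B" "\<bar>g\<bar> \<le> c / P"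
  shows "g\<^sup>2 * w\<^sup>2 \<le> 2 * B\<^sup>2 * (\<phi> - w)\<^sup>2 + 2 * c\<^sup>2 * (\<phi> / P)\<^sup>2"
proof -
  have "w\<^sup>2 \<le> 2 * (\<phi> - w)\<^sup>2 + 2 * \<phi>\<^sup>2"
    using zero_le_power2[of "2 * \<phi> - w"] by (simp add: power2_eq_square algebra_simps)
  then have "g\<^sup>2 * w\<^sup>2 \<le> g\<^sup>2 * (2 * (\<phi> - w)\<^sup>2 + 2 * \<phi>\<^sup>2)"
    by (rule mult_left_mono) simp
  also have "\<dots> = 2 * (g\<^sup>2 * (\<phi> - w)\<^sup>2) + 2 * (g\<^sup>2 * \<phi>\<^sup>2)"
    by (simp add: distrib_left)
  also have "\<dots> \<le> 2 * (B\<^sup>2 * (\<phi> - w)\<^sup>2) + 2 * ((c / P)\<^sup>2 * \<phi>\<^sup>2)"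
    using power_mono[OF assms(1) abs_ge_zero, of 2] power_mono[OF assms(2) abs_ge_zero, of 2]
    by (intro add_mono mult_left_mono mult_right_mono) auto
  also have "\<dots> = 2 * B\<^sup>2 * (\<phi> - w)\<^sup>2 + 2 * c\<^sup>2 * (\<phi> / P)\<^sup>2"
    by (simp add: power_divide)
  finally show ?thesis .
qed

lemma abs_mult_le_mult: "\<bar>x\<bar> \<le> X \<Longrightarrow> \<bar>y\<bar> \<le> Y \<Longrightarrow> \<bar>x * y\<bar> \<le> X * (Y::real)"
  by (simp add: abs_mult mult_mono')

lemma abs_divide_le_mult: "\<bar>c\<bar> \<le> B \<Longrightarrow> \<bar>1 / P\<bar> \<le> R \<Longrightarrow> \<bar>c / P\<bar> \<le> B * (R::real)"
  using abs_mult_le_mult[of c B "1 / P" R] by simp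

(* Every partial derivative of g has the shape  Phi eps (mu''(s) (ds) A + mu'(s) (dA)),  where ds, A
   and dA are among the quotients bounded in gap_quotient_bounds. *)

lemma abs_chain_term_le:
  fixes D D' \<sigma> A A' \<epsilon> \<Phi> R \<beta> L M1 M2 :: real
  assumes "\<bar>D\<bar> \<le> M1" "\<bar>D'\<bar> \<le> M2" "\<bar>\<sigma>\<bar> \<le> 2 * \<beta> * R" "\<bar>A\<bar> \<le> 2 * \<beta> * R" "\<bar>A'\<bar> \<le> L * R\<^sup>2"
    and "0 \<le> \<epsilon>" "\<epsilon> \<le> 1" "0 \<le> \<Phi>"
  shows "\<bar>\<Phi> * \<epsilon> * (D' * (\<epsilon> * \<sigma>) * A + D * A')\<bar> \<le> \<Phi> * (4 * \<beta>\<^sup>2 * M2 + L * M1) * R\<^sup>2"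
proof -
  have \<epsilon>: "\<bar>\<epsilon>\<bar> \<le> 1"
    using assms by simp
  have "\<bar>D' * (\<epsilon> * \<sigma>) * A + D * A'\<bar> \<le> M2 * (1 * (2 * \<beta> * R)) * (2 * \<beta> * R) + M1 * (L * R\<^sup>2)"
    using assms by (intro order_trans[OF abs_triangle_ineq] add_mono abs_mult_le_mult \<epsilon>)
  then have "\<bar>\<Phi> * \<epsilon> * (D' * (\<epsilon> * \<sigma>) * A + D * A')\<bar>
      \<le> \<Phi> * 1 * (M2 * (1 * (2 * \<beta> * R)) * (2 * \<beta> * R) + M1 * (L * R\<^sup>2))"
    using assms by (intro abs_mult_le_mult \<epsilon>) simp_all
  then show ?thesis
    by (simp add: power2_eq_square algebra_simps)
qed

lemma gap_quotient_bounds: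
  fixes P Q a m a' m' \<beta> \<Gamma> R :: real
  assumes iP: "\<bar>1 / P\<bar> \<le> R" and iQ: "\<bar>1 / Q\<bar> \<le> R"
    and slopes: "\<bar>a\<bar> \<le> \<beta>" "\<bar>m\<bar> \<le> \<beta>" "1 \<le> \<beta>"
    and curv: "\<bar>a'\<bar> \<le> \<Gamma> * R" "\<bar>m'\<bar> \<le> \<Gamma> * R" "0 \<le> \<Gamma>"
  shows "\<bar>a / P + m / Q\<bar> \<le> 2 * \<beta> * R" "\<bar>- 1 / P - 1 / Q\<bar> \<le> 2 * \<beta> * R"
    and "\<bar>a / P\<^sup>2 - m / Q\<^sup>2\<bar> \<le> (2 * \<Gamma> + 2 * \<beta>\<^sup>2) * R\<^sup>2"
    and "\<bar>1 / Q\<^sup>2 - 1 / P\<^sup>2\<bar> \<le> (2 * \<Gamma> + 2 * \<beta>\<^sup>2) * R\<^sup>2"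
    and "\<bar>a' / P - a\<^sup>2 / P\<^sup>2 + m' / Q + m\<^sup>2 / Q\<^sup>2\<bar> \<le> (2 * \<Gamma> + 2 * \<beta>\<^sup>2) * R\<^sup>2"
proof -
  define L where "L = 2 * \<Gamma> + 2 * \<beta>\<^sup>2"
  have iP2: "\<bar>1 / P\<^sup>2\<bar> \<le> R\<^sup>2" and iQ2: "\<bar>1 / Q\<^sup>2\<bar> \<le> R\<^sup>2"
    using power_mono[OF iP abs_ge_zero, of 2] power_mono[OF iQ abs_ge_zero, of 2]
    by (simp_all add: power_one_over)
  have one: "\<bar>1\<bar> \<le> \<beta>"
    using slopes(3) by simp
  have slopes2: "\<bar>a\<^sup>2\<bar> \<le> \<beta>\<^sup>2" "\<bar>m\<^sup>2\<bar> \<le> \<beta>\<^sup>2"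
    using power_mono[OF slopes(1) abs_ge_zero, of 2] power_mono[OF slopes(2) abs_ge_zero, of 2] by simp_all
  have "\<beta> \<le> \<beta>\<^sup>2"
    using slopes(3) by (simp add: power2_eq_square)
  then have "2 \<le> L" "2 * \<beta> \<le> L"
    using slopes(3) curv(3) by (auto simp: L_def)
  then have L: "2 * R\<^sup>2 \<le> L * R\<^sup>2" "2 * \<beta> * R\<^sup>2 \<le> L * R\<^sup>2"
    using mult_right_mono[of 2 L "R\<^sup>2"] mult_right_mono[of "2 * \<beta>" L "R\<^sup>2"] by simp_all
  show "\<bar>a / P + m / Q\<bar> \<le> 2 * \<beta> * R" "\<bar>- 1 / P - 1 / Q\<bar> \<le> 2 * \<beta> * R"
    using abs_divide_le_mult[OF slopes(1) iP] abs_divide_le_mult[OF slopes(2) iQ]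
      abs_divide_le_mult[OF one iP] abs_divide_le_mult[OF one iQ]
    by (simp_all only: abs_le_iff) linarith+
  have "L * R\<^sup>2 = \<Gamma> * R * R + \<beta>\<^sup>2 * R\<^sup>2 + \<Gamma> * R * R + \<beta>\<^sup>2 * R\<^sup>2"
    by (simp add: L_def power2_eq_square algebra_simps)
  then show "\<bar>a / P\<^sup>2 - m / Q\<^sup>2\<bar> \<le> (2 * \<Gamma> + 2 * \<beta>\<^sup>2) * R\<^sup>2"
    and "\<bar>1 / Q\<^sup>2 - 1 / P\<^sup>2\<bar> \<le> (2 * \<Gamma> + 2 * \<beta>\<^sup>2) * R\<^sup>2"
    and "\<bar>a' / P - a\<^sup>2 / P\<^sup>2 + m' / Q + m\<^sup>2 / Q\<^sup>2\<bar> \<le> (2 * \<Gamma> + 2 * \<beta>\<^sup>2) * R\<^sup>2"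
    unfolding L_def[symmetric]
    using L abs_divide_le_mult[OF slopes(1) iP2] abs_divide_le_mult[OF slopes(2) iQ2]
      abs_divide_le_mult[OF one iP2] abs_divide_le_mult[OF one iQ2]
      abs_divide_le_mult[OF curv(1) iP] abs_divide_le_mult[OF slopes2(1) iP2]
      abs_divide_le_mult[OF curv(2) iQ] abs_divide_le_mult[OF slopes2(2) iQ2]
    by (simp_all only: abs_le_iff) linarith+
qed

lemma sqrt_sum4_squares_le_sum_abs: "sqrt (a\<^sup>2 + b\<^sup>2 + c\<^sup>2 + d\<^sup>2) \<le> \<bar>a\<bar> + \<bar>b\<bar> + \<bar>c\<bar> + \<bar>d::real\<bar>"
  by (rule real_le_lsqrt) (simp_all add: power2_eq_square algebra_simps)

lemma energy_density_le:
  fixes gn nn c \<Phi> F :: real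
  assumes "0 \<le> gn" "0 \<le> nn" "gn \<le> c * \<Phi> / F\<^sup>2" "nn \<le> c * \<Phi> / F" "1 \<le> c" "0 < F" "0 \<le> \<Phi>"
  shows "gn\<^sup>2 + nn ^ 4 \<le> c ^ 4 * (\<Phi>\<^sup>2 + \<Phi> ^ 4) / F ^ 4"
proof -
  have "gn\<^sup>2 \<le> (c * \<Phi> / F\<^sup>2)\<^sup>2" "nn ^ 4 \<le> (c * \<Phi> / F) ^ 4"
    using assms by (simp_all add: power_mono)
  moreover have "(c * \<Phi> / F\<^sup>2)\<^sup>2 \<le> c ^ 4 * \<Phi>\<^sup>2 / F ^ 4"
  proof -
    have "c\<^sup>2 \<le> c ^ 4"
      using assms(5) by (intro power_increasing) auto
    then show ?thesis
      using assms(6) by (simp add: power_divide power_mult_distrib divide_right_mono mult_right_mono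
          flip: power_mult)
  qed
  ultimately show ?thesis
    by (simp add: power_divide power_mult_distrib add_divide_distrib distrib_left)
qed

section \<open>The flux carrier\<close>

locale flux_channel =
  fixes f1 f2 \<mu> :: "real \<Rightarrow> real"
  assumes f1_smooth: "smooth_fun f1" and f2_smooth: "smooth_fun f2"
    and width_lower_bound: "\<exists>d>0. \<forall>t. d \<le> f2 t - f1 t"
    and slopes_bounded: "bounded (range (deriv f1))" "bounded (range (deriv f2))"
    and cutoff_smooth: "smooth_fun \<mu>"
    and cutoff_1: "\<forall>t\<ge>1. \<mu> t = 0" and cutoff_0: "\<forall>t\<le>0. \<mu> t = 1"
begin

lemma width_pos: "0 < f2 t - f1 t"
  using width_lower_bound by (metis less_le_trans)

lemma DERIV_chain_channel [derivative_intros]: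
  assumes "(g has_real_derivative g') (at x within S)"
  shows "((\<lambda>x. f1 (g x)) has_real_derivative deriv f1 (g x) * g') (at x within S)"
    and "((\<lambda>x. f2 (g x)) has_real_derivative deriv f2 (g x) * g') (at x within S)"
    and "((\<lambda>x. deriv f1 (g x)) has_real_derivative deriv (deriv f1) (g x) * g') (at x within S)"
    and "((\<lambda>x. deriv f2 (g x)) has_real_derivative deriv (deriv f2) (g x) * g') (at x within S)"
    and "((\<lambda>x. \<mu> (g x)) has_real_derivative deriv \<mu> (g x) * g') (at x within S)"
  using f1_smooth f2_smooth cutoff_smooth
  by (auto intro!: DERIV_chain2[OF smooth_fun_has_real_derivative assms] smooth_fun_deriv)

lemma continuous_on_channel [continuous_intros]:
  assumes "continuous_on S g"
  shows "continuous_on S (\<lambda>x. f1 (g x))" "continuous_on S (\<lambda>x. f2 (g x))"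
  using f1_smooth f2_smooth
  by (auto intro!: continuous_on_compose2[OF _ assms] continuous_at_imp_continuous_on
      DERIV_isCont smooth_fun_has_real_derivative)

lemma deriv_cutoff_eq_0:
  assumes "s \<notin> {0..1}"
  shows "deriv \<mu> s = 0" "deriv (deriv \<mu>) s = 0"
proof -
  let ?S = "{..<0} \<union> {1<..} :: real set"
  have "deriv \<mu> x = 0" if "x \<in> ?S" for x
  proof (cases "x < 0")
    case True
    then show ?thesis
      using cutoff_0 by (intro deriv_eq_0_if_locally_constant[of "{..<0}" x _ 1]) auto
  next
    case False
    then show ?thesis
      using that cutoff_1 by (intro deriv_eq_0_if_locally_constant[of "{1<..}" x _ 0]) auto
  qed
  moreover have "s \<in> ?S" using assms by auto
  ultimately show "deriv \<mu> s = 0" "deriv (deriv \<mu>) s = 0"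
    by (auto intro!: deriv_eq_0_if_locally_constant[of ?S s _ 0])
qed

lemma cutoff_derivs_bounded:
  obtains M1 M2 where "\<And>s. \<bar>deriv \<mu> s\<bar> \<le> M1" "\<And>s. \<bar>deriv (deriv \<mu>) s\<bar> \<le> M2"
proof -
  have "\<exists>M. \<forall>s. \<bar>h s\<bar> \<le> M" if "smooth_fun h" "\<And>s. s \<notin> {0..1} \<Longrightarrow> h s = 0" for h
  proof -
    have "continuous_on {0..1} h"
      using that(1) by (intro continuous_at_imp_continuous_on ballI DERIV_isCont[OF smooth_fun_has_real_derivative])
    then have "bounded (h ` {0..1})"
      by (intro compact_imp_bounded compact_continuous_image compact_Icc)
    then obtain M where M: "\<And>s. s \<in> {0..1} \<Longrightarrow> \<bar>h s\<bar> \<le> M"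
      unfolding bounded_iff by (auto simp del: atLeastAtMost_iff)
    have "\<bar>h s\<bar> \<le> M" for s
      using M[of s] M[of 0] that(2)[of s] by (cases "s \<in> {0..1}") auto
    then show ?thesis by blast
  qed
  then show ?thesis
    using that deriv_cutoff_eq_0 cutoff_smooth smooth_fun_deriv by metis
qed

lemma slope_bound:
  obtains \<beta> where "1 \<le> \<beta>" "\<And>t. \<bar>deriv f1 t\<bar> \<le> \<beta>" "\<And>t. \<bar>deriv f2 t\<bar> \<le> \<beta>"
proof -
  obtain b1 b2 where "\<And>t. \<bar>deriv f1 t\<bar> \<le> b1" "\<And>t. \<bar>deriv f2 t\<bar> \<le> b2"
    using slopes_bounded unfolding bounded_iff by auto
  then show ?thesis
    by (intro that[of "max 1 (max b1 b2)"]) (auto intro: le_max_iff_disj[THEN iffD2])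
qed

lemma curvature_bound:
  assumes "bounded (range (\<lambda>t. deriv (deriv f1) t * (f2 t - f1 t)))"
    and "bounded (range (\<lambda>t. deriv (deriv f2) t * (f2 t - f1 t)))"
  obtains \<Gamma> where "\<And>t. \<bar>deriv (deriv f1) t * (f2 t - f1 t)\<bar> \<le> \<Gamma>"
    "\<And>t. \<bar>deriv (deriv f2) t * (f2 t - f1 t)\<bar> \<le> \<Gamma>"
proof -
  obtain G1 G2 where "\<And>t. \<bar>deriv (deriv f1) t * (f2 t - f1 t)\<bar> \<le> G1"
      "\<And>t. \<bar>deriv (deriv f2) t * (f2 t - f1 t)\<bar> \<le> G2"
    using assms unfolding bounded_iff by auto
  then show ?thesis
    by (intro that[of "max G1 G2"]) (auto intro: le_max_iff_disj[THEN iffD2])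
qed

(* G vanishes on the open set null_region: there either mid_gap <= 0, or mid_gap > 0 and the argument
   of mu exceeds 1.  On the open set log_region it equals Phi mu (cutoff_arg eps x). *)

definition top_gap :: "real \<times> real \<Rightarrow> real" where
  "top_gap x = f2 (fst x) - snd x"

definition mid_gap :: "real \<times> real \<Rightarrow> real" where
  "mid_gap x = snd x - (f1 (fst x) + f2 (fst x)) / 2"

definition cutoff_arg :: "real \<Rightarrow> real \<times> real \<Rightarrow> real" where
  "cutoff_arg \<epsilon> x = 1 + \<epsilon> * (ln (top_gap x) - ln (mid_gap x))"

definition mean_slope :: "real \<Rightarrow> real" where
  "mean_slope t = (deriv f1 t + deriv f2 t) / 2"

definition mean_curvature :: "real \<Rightarrow> real" where
  "mean_curvature t = (deriv (deriv f1) t + deriv (deriv f2) t) / 2"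

definition null_region :: "(real \<times> real) set" where
  "null_region = {x. mid_gap x < top_gap x}"

definition log_region :: "(real \<times> real) set" where
  "log_region = {x. 0 < mid_gap x \<and> 0 < top_gap x}"

lemma open_null_region: "open null_region"
  unfolding null_region_def mid_gap_def top_gap_def
  by (intro open_Collect_less continuous_intros) auto

lemma open_log_region: "open log_region"
  unfolding log_region_def mid_gap_def top_gap_def
  by (intro open_Collect_conj open_Collect_less continuous_intros) auto

lemma Omega_subset_regions: "Omega f1 f2 \<subseteq> null_region \<union> log_region"
  unfolding Omega_def null_region_def log_region_def top_gap_def by auto

lemma fluxG_null_region:
  assumes "0 < \<epsilon>" "x \<in> null_region"
  shows "fluxG f1 f2 \<mu> \<epsilon> \<Phi> x = 0"
proof (cases "0 < mid_gap x")
  case True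
  then have "1 < top_gap x / mid_gap x"
    using assms(2) by (simp add: null_region_def)
  then have "1 \<le> 1 + \<epsilon> * ln (top_gap x / mid_gap x)"
    using assms(1) by simp
  then show ?thesis
    using cutoff_1 True unfolding fluxG_def top_gap_def mid_gap_def Let_def by auto
next
  case False
  then show ?thesis
    unfolding fluxG_def mid_gap_def Let_def by auto
qed

lemma fluxG_log_region:
  assumes "x \<in> log_region"
  shows "fluxG f1 f2 \<mu> \<epsilon> \<Phi> x = \<Phi> * \<mu> (cutoff_arg \<epsilon> x)"
  using assms unfolding log_region_def fluxG_def cutoff_arg_def Let_def
  by (simp add: ln_div top_gap_def mid_gap_def)

lemma flux_g_null_region:
  assumes "0 < \<epsilon>" "x \<in> null_region"
  shows "flux_g1 f1 f2 \<mu> \<epsilon> \<Phi> x = 0" "flux_g2 f1 f2 \<mu> \<epsilon> \<Phi> x = 0"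
  using pd1_eq_on_open[OF open_null_region assms(2) _ DERIV_const]
    pd2_eq_on_open[OF open_null_region assms(2) _ DERIV_const]
    fluxG_null_region[OF assms(1)]
  by (auto simp: flux_g_eq_pd)

lemma pd_flux_g_null_region:
  assumes "0 < \<epsilon>" "x \<in> null_region"
  shows "pd1 (flux_g1 f1 f2 \<mu> \<epsilon> \<Phi>) x = 0" "pd2 (flux_g1 f1 f2 \<mu> \<epsilon> \<Phi>) x = 0"
    and "pd1 (flux_g2 f1 f2 \<mu> \<epsilon> \<Phi>) x = 0" "pd2 (flux_g2 f1 f2 \<mu> \<epsilon> \<Phi>) x = 0"
  using pd1_eq_on_open[OF open_null_region assms(2) _ DERIV_const]
    pd2_eq_on_open[OF open_null_region assms(2) _ DERIV_const]
    flux_g_null_region[OF assms(1)]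
  by auto

lemma has_real_derivative_gaps:
  "((\<lambda>t. top_gap (t, b)) has_real_derivative deriv f2 a) (at a)"
  "((\<lambda>t. mid_gap (t, b)) has_real_derivative - mean_slope a) (at a)"
  "((\<lambda>t. top_gap (a, t)) has_real_derivative - 1) (at b)"
  "((\<lambda>t. mid_gap (a, t)) has_real_derivative 1) (at b)"
  unfolding top_gap_def mid_gap_def mean_slope_def
  by (auto intro!: derivative_eq_intros simp: field_simps)

lemma has_real_derivative_cutoff_arg:
  assumes "x \<in> log_region"
  shows "((\<lambda>t. cutoff_arg \<epsilon> (t, snd x)) has_real_derivative
      \<epsilon> * (deriv f2 (fst x) / top_gap x + mean_slope (fst x) / mid_gap x)) (at (fst x))"
    and "((\<lambda>t. cutoff_arg \<epsilon> (fst x, t)) has_real_derivative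
      \<epsilon> * (- 1 / top_gap x - 1 / mid_gap x)) (at (snd x))"
  using assms unfolding cutoff_arg_def log_region_def
  by (auto intro!: derivative_eq_intros has_real_derivative_gaps simp: field_simps)

lemma flux_g_log_region:
  assumes "x \<in> log_region"
  shows "flux_g1 f1 f2 \<mu> \<epsilon> \<Phi> x
      = \<Phi> * \<epsilon> * deriv \<mu> (cutoff_arg \<epsilon> x) * (- 1 / top_gap x - 1 / mid_gap x)"
    and "flux_g2 f1 f2 \<mu> \<epsilon> \<Phi> x
      = - (\<Phi> * \<epsilon> * deriv \<mu> (cutoff_arg \<epsilon> x) * (deriv f2 (fst x) / top_gap x + mean_slope (fst x) / mid_gap x))"
  unfolding flux_g_eq_pd neg_equal_iff_equal
  by (intro pd2_eq_on_open[OF open_log_region assms fluxG_log_region]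
      pd1_eq_on_open[OF open_log_region assms fluxG_log_region],
      auto intro!: derivative_eq_intros has_real_derivative_cutoff_arg[OF assms])+

lemma deriv_cutoff_has_real_derivative: "(deriv \<mu> has_real_derivative deriv (deriv \<mu>) s) (at s)"
  using cutoff_smooth by (intro smooth_fun_has_real_derivative smooth_fun_deriv)

lemma pd_flux_g1_log_region:
  fixes \<epsilon> \<Phi> :: real
  assumes "x \<in> log_region"
  defines "P \<equiv> top_gap x" and "Q \<equiv> mid_gap x" and "s \<equiv> cutoff_arg \<epsilon> x"
    and "m \<equiv> mean_slope (fst x)"
  shows "pd1 (flux_g1 f1 f2 \<mu> \<epsilon> \<Phi>) x = \<Phi> * \<epsilon> *
      (deriv (deriv \<mu>) s * (\<epsilon> * (deriv f2 (fst x) / P + m / Q)) * (- 1 / P - 1 / Q)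
        + deriv \<mu> s * (deriv f2 (fst x) / P\<^sup>2 - m / Q\<^sup>2))"
    and "pd2 (flux_g1 f1 f2 \<mu> \<epsilon> \<Phi>) x = \<Phi> * \<epsilon> *
      (deriv (deriv \<mu>) s * (\<epsilon> * (- 1 / P - 1 / Q)) * (- 1 / P - 1 / Q)
        + deriv \<mu> s * (1 / Q\<^sup>2 - 1 / P\<^sup>2))"
proof -
  let ?A = "\<lambda>y. - 1 / top_gap y - 1 / mid_gap y"
  have pos: "0 < top_gap (fst x, snd x)" "0 < mid_gap (fst x, snd x)"
    using assms(1) by (auto simp: log_region_def)
  have g1: "flux_g1 f1 f2 \<mu> \<epsilon> \<Phi> y = \<Phi> * \<epsilon> * (deriv \<mu> (cutoff_arg \<epsilon> y) * ?A y)"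
    if "y \<in> log_region" for y
    using flux_g_log_region(1)[OF that] by simp
  have "((\<lambda>t. ?A (t, snd x)) has_real_derivative deriv f2 (fst x) / P\<^sup>2 - m / Q\<^sup>2) (at (fst x))"
    using pos unfolding P_def Q_def m_def
    by (auto intro!: derivative_eq_intros has_real_derivative_gaps simp: power2_eq_square)
  from DERIV_cmult[OF DERIV_mult[OF DERIV_chain2[OF deriv_cutoff_has_real_derivative
      has_real_derivative_cutoff_arg(1)[OF assms(1), of \<epsilon>]] this], of "\<Phi> * \<epsilon>"]
  show "pd1 (flux_g1 f1 f2 \<mu> \<epsilon> \<Phi>) x = \<Phi> * \<epsilon> *
      (deriv (deriv \<mu>) s * (\<epsilon> * (deriv f2 (fst x) / P + m / Q)) * (- 1 / P - 1 / Q)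
        + deriv \<mu> s * (deriv f2 (fst x) / P\<^sup>2 - m / Q\<^sup>2))"
    unfolding P_def Q_def s_def m_def
    by (intro pd1_eq_on_open[OF open_log_region assms(1) g1]) (simp_all add: ac_simps)
  have "((\<lambda>t. ?A (fst x, t)) has_real_derivative 1 / Q\<^sup>2 - 1 / P\<^sup>2) (at (snd x))"
    using pos unfolding P_def Q_def
    by (auto intro!: derivative_eq_intros has_real_derivative_gaps simp: power2_eq_square)
  from DERIV_cmult[OF DERIV_mult[OF DERIV_chain2[OF deriv_cutoff_has_real_derivative
      has_real_derivative_cutoff_arg(2)[OF assms(1), of \<epsilon>]] this], of "\<Phi> * \<epsilon>"]
  show "pd2 (flux_g1 f1 f2 \<mu> \<epsilon> \<Phi>) x = \<Phi> * \<epsilon> *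
      (deriv (deriv \<mu>) s * (\<epsilon> * (- 1 / P - 1 / Q)) * (- 1 / P - 1 / Q)
        + deriv \<mu> s * (1 / Q\<^sup>2 - 1 / P\<^sup>2))"
    unfolding P_def Q_def s_def
    by (intro pd2_eq_on_open[OF open_log_region assms(1) g1]) (simp_all add: ac_simps)
qed

lemma has_real_derivative_mean_slope: "(mean_slope has_real_derivative mean_curvature t) (at t)"
  unfolding mean_slope_def mean_curvature_def by (auto intro!: derivative_eq_intros)

lemma pd_flux_g2_log_region:
  fixes \<epsilon> \<Phi> :: real
  assumes "x \<in> log_region"
  defines "P \<equiv> top_gap x" and "Q \<equiv> mid_gap x" and "s \<equiv> cutoff_arg \<epsilon> x"
    and "f2' \<equiv> deriv f2 (fst x)" and "m \<equiv> mean_slope (fst x)"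
  shows "pd1 (flux_g2 f1 f2 \<mu> \<epsilon> \<Phi>) x = - (\<Phi> * \<epsilon> *
      (deriv (deriv \<mu>) s * (\<epsilon> * (f2' / P + m / Q)) * (f2' / P + m / Q)
        + deriv \<mu> s * (deriv (deriv f2) (fst x) / P - f2'\<^sup>2 / P\<^sup>2
          + mean_curvature (fst x) / Q + m\<^sup>2 / Q\<^sup>2)))"
    and "pd2 (flux_g2 f1 f2 \<mu> \<epsilon> \<Phi>) x = - (\<Phi> * \<epsilon> *
      (deriv (deriv \<mu>) s * (\<epsilon> * (- 1 / P - 1 / Q)) * (f2' / P + m / Q)
        + deriv \<mu> s * (f2' / P\<^sup>2 - m / Q\<^sup>2)))"
proof -
  let ?B = "\<lambda>y. deriv f2 (fst y) / top_gap y + mean_slope (fst y) / mid_gap y"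
  have pos: "0 < top_gap (fst x, snd x)" "0 < mid_gap (fst x, snd x)"
    using assms(1) by (auto simp: log_region_def)
  have g2: "flux_g2 f1 f2 \<mu> \<epsilon> \<Phi> y = - (\<Phi> * \<epsilon> * (deriv \<mu> (cutoff_arg \<epsilon> y) * ?B y))"
    if "y \<in> log_region" for y
    using flux_g_log_region(2)[OF that] by simp
  have "((\<lambda>t. ?B (t, snd x)) has_real_derivative deriv (deriv f2) (fst x) / P - f2'\<^sup>2 / P\<^sup>2
      + mean_curvature (fst x) / Q + m\<^sup>2 / Q\<^sup>2) (at (fst x))"
    using pos unfolding P_def Q_def f2'_def m_def
    by (auto intro!: derivative_eq_intros has_real_derivative_gaps has_real_derivative_mean_slope
        simp: power2_eq_square diff_divide_distrib add_divide_distrib)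
  from DERIV_minus[OF DERIV_cmult[OF DERIV_mult[OF DERIV_chain2[OF deriv_cutoff_has_real_derivative
      has_real_derivative_cutoff_arg(1)[OF assms(1), of \<epsilon>]] this], of "\<Phi> * \<epsilon>"]]
  show "pd1 (flux_g2 f1 f2 \<mu> \<epsilon> \<Phi>) x = - (\<Phi> * \<epsilon> *
      (deriv (deriv \<mu>) s * (\<epsilon> * (f2' / P + m / Q)) * (f2' / P + m / Q)
        + deriv \<mu> s * (deriv (deriv f2) (fst x) / P - f2'\<^sup>2 / P\<^sup>2
          + mean_curvature (fst x) / Q + m\<^sup>2 / Q\<^sup>2)))"
    unfolding P_def Q_def s_def f2'_def m_def
    by (intro pd1_eq_on_open[OF open_log_region assms(1) g2]) (simp_all add: ac_simps)
  have "((\<lambda>t. ?B (fst x, t)) has_real_derivative f2' / P\<^sup>2 - m / Q\<^sup>2) (at (snd x))"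
    using pos unfolding P_def Q_def f2'_def m_def
    by (auto intro!: derivative_eq_intros has_real_derivative_gaps simp: power2_eq_square)
  from DERIV_minus[OF DERIV_cmult[OF DERIV_mult[OF DERIV_chain2[OF deriv_cutoff_has_real_derivative
      has_real_derivative_cutoff_arg(2)[OF assms(1), of \<epsilon>]] this], of "\<Phi> * \<epsilon>"]]
  show "pd2 (flux_g2 f1 f2 \<mu> \<epsilon> \<Phi>) x = - (\<Phi> * \<epsilon> *
      (deriv (deriv \<mu>) s * (\<epsilon> * (- 1 / P - 1 / Q)) * (f2' / P + m / Q)
        + deriv \<mu> s * (f2' / P\<^sup>2 - m / Q\<^sup>2)))"
    unfolding P_def Q_def s_def f2'_def m_def
    by (intro pd2_eq_on_open[OF open_log_region assms(1) g2]) (simp_all add: ac_simps)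
qed

definition cutoff_support :: "real \<Rightarrow> (real \<times> real) set" where
  "cutoff_support \<epsilon> = {x \<in> log_region. cutoff_arg \<epsilon> x \<in> {0..1}}"

lemma flux_vanishes_off_support:
  assumes "0 < \<epsilon>" "x \<in> Omega f1 f2" "x \<notin> cutoff_support \<epsilon>"
  shows "flux_g1 f1 f2 \<mu> \<epsilon> \<Phi> x = 0" "flux_g2 f1 f2 \<mu> \<epsilon> \<Phi> x = 0"
    and "pd1 (flux_g1 f1 f2 \<mu> \<epsilon> \<Phi>) x = 0" "pd2 (flux_g1 f1 f2 \<mu> \<epsilon> \<Phi>) x = 0"
    and "pd1 (flux_g2 f1 f2 \<mu> \<epsilon> \<Phi>) x = 0" "pd2 (flux_g2 f1 f2 \<mu> \<epsilon> \<Phi>) x = 0"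
proof -
  have "x \<in> null_region \<or>
      x \<in> log_region \<and> deriv \<mu> (cutoff_arg \<epsilon> x) = 0 \<and> deriv (deriv \<mu>) (cutoff_arg \<epsilon> x) = 0"
    using assms(2,3) Omega_subset_regions deriv_cutoff_eq_0 by (auto simp: cutoff_support_def)
  then show "flux_g1 f1 f2 \<mu> \<epsilon> \<Phi> x = 0" "flux_g2 f1 f2 \<mu> \<epsilon> \<Phi> x = 0"
    and "pd1 (flux_g1 f1 f2 \<mu> \<epsilon> \<Phi>) x = 0" "pd2 (flux_g1 f1 f2 \<mu> \<epsilon> \<Phi>) x = 0"
    and "pd1 (flux_g2 f1 f2 \<mu> \<epsilon> \<Phi>) x = 0" "pd2 (flux_g2 f1 f2 \<mu> \<epsilon> \<Phi>) x = 0"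
    using assms(1) by (auto simp: flux_g_null_region pd_flux_g_null_region flux_g_log_region
        pd_flux_g1_log_region pd_flux_g2_log_region)
qed

lemma cutoff_support_gap_bounds:
  assumes "x \<in> cutoff_support \<epsilon>" "0 < \<epsilon>"
  shows "1 / top_gap x \<le> 4 / (exp (- 1 / \<epsilon>) * (f2 (fst x) - f1 (fst x)))"
    and "1 / mid_gap x \<le> 1 / top_gap x"
proof -
  define P Q F \<delta> where "P = top_gap x" and "Q = mid_gap x"
    and "F = f2 (fst x) - f1 (fst x)" and "\<delta> = exp (- 1 / \<epsilon>)"
  have pos: "0 < P" "0 < Q"
    using assms(1) by (auto simp: cutoff_support_def log_region_def P_def Q_def)
  have sum: "P + Q = F / 2"
    by (simp add: P_def Q_def F_def top_gap_def mid_gap_def field_simps)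
  have "\<epsilon> * (ln P - ln Q) \<le> 0" "- 1 \<le> \<epsilon> * (ln P - ln Q)"
    using assms(1) by (auto simp: cutoff_support_def cutoff_arg_def P_def Q_def)
  then have log_bounds: "ln P \<le> ln Q" "- 1 / \<epsilon> \<le> ln (P / Q)"
    using assms(2) pos
    by (simp_all add: mult_le_0_iff ln_div pos_divide_le_eq[OF assms(2)] del: divide_minus_left)
      (simp add: algebra_simps)
  have PQ: "P \<le> Q"
    using log_bounds(1) pos by simp
  have "\<delta> \<le> exp (ln (P / Q))"
    unfolding \<delta>_def using log_bounds(2) by simp
  also have "\<dots> = P / Q"
    using pos by simp
  finally have "\<delta> * Q \<le> P"
    using pos by (simp add: pos_le_divide_eq)
  moreover have "\<delta> * (F / 4) \<le> \<delta> * Q"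
    using PQ sum by (intro mult_left_mono) (auto simp: \<delta>_def)
  ultimately have "\<delta> * (F / 4) \<le> P"
    by linarith
  moreover have "0 < \<delta> * (F / 4)"
    using pos sum by (simp add: \<delta>_def)
  ultimately show "1 / top_gap x \<le> 4 / (exp (- 1 / \<epsilon>) * (f2 (fst x) - f1 (fst x)))"
    using frac_le[of 1 1 "\<delta> * (F / 4)" P] by (simp add: P_def F_def \<delta>_def)
  show "1 / mid_gap x \<le> 1 / top_gap x"
    using PQ pos by (simp add: P_def Q_def frac_le)
qed

lemma flux_g1_bounds_on_support:
  assumes "x \<in> cutoff_support \<epsilon>" "0 < \<epsilon>" "0 \<le> \<Phi>" and M1: "\<And>s. \<bar>deriv \<mu> s\<bar> \<le> M1"
  shows "\<bar>flux_g1 f1 f2 \<mu> \<epsilon> \<Phi> x\<bar> \<le> 2 * \<Phi> * \<epsilon> * M1 / top_gap x"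
    and "\<bar>flux_g1 f1 f2 \<mu> \<epsilon> \<Phi> x\<bar> \<le> 2 * \<Phi> * \<epsilon> * M1 * (4 / (exp (- 1 / \<epsilon>) * (f2 (fst x) - f1 (fst x))))"
proof -
  define P Q s where "P = top_gap x" and "Q = mid_gap x" and "s = cutoff_arg \<epsilon> x"
  have x: "x \<in> log_region"
    using assms(1) by (simp add: cutoff_support_def)
  have pos: "0 < 1 / P" "0 < 1 / Q"
    using x by (auto simp: log_region_def P_def Q_def)
  note PR = cutoff_support_gap_bounds[OF assms(1,2), folded P_def Q_def]
  have "\<bar>- 1 / P - 1 / Q\<bar> = 1 / P + 1 / Q"
    using pos by arith
  then have "\<bar>flux_g1 f1 f2 \<mu> \<epsilon> \<Phi> x\<bar> = \<Phi> * \<epsilon> * (\<bar>deriv \<mu> s\<bar> * (1 / P + 1 / Q))"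
    using assms(2,3) by (simp add: flux_g_log_region[OF x] abs_mult P_def Q_def s_def)
  also have "\<dots> \<le> \<Phi> * \<epsilon> * (M1 * (2 * (1 / P)))"
    using assms(2,3) PR pos M1[of s] M1[of 0] by (intro mult_left_mono mult_mono) auto
  finally show "\<bar>flux_g1 f1 f2 \<mu> \<epsilon> \<Phi> x\<bar> \<le> 2 * \<Phi> * \<epsilon> * M1 / top_gap x"
    by (simp add: P_def mult_ac)
  also have "\<dots> = 2 * \<Phi> * \<epsilon> * M1 * (1 / P)"
    by (simp add: P_def)
  also have "\<dots> \<le> 2 * \<Phi> * \<epsilon> * M1 * (4 / (exp (- 1 / \<epsilon>) * (f2 (fst x) - f1 (fst x))))"
    using PR(1) assms(2,3) M1[of 0] by (intro mult_left_mono) auto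
  finally show "\<bar>flux_g1 f1 f2 \<mu> \<epsilon> \<Phi> x\<bar> \<le> 2 * \<Phi> * \<epsilon> * M1 * (4 / (exp (- 1 / \<epsilon>) * (f2 (fst x) - f1 (fst x))))" .
qed

lemma flux_g2_bound_on_support:
  assumes "x \<in> cutoff_support \<epsilon>" "0 < \<epsilon>" "0 \<le> \<Phi>"
    and M1: "\<And>s. \<bar>deriv \<mu> s\<bar> \<le> M1" and \<beta>: "\<And>t. \<bar>deriv f1 t\<bar> \<le> \<beta>" "\<And>t. \<bar>deriv f2 t\<bar> \<le> \<beta>"
  defines "R \<equiv> 4 / (exp (- 1 / \<epsilon>) * (f2 (fst x) - f1 (fst x)))"
  shows "\<bar>flux_g2 f1 f2 \<mu> \<epsilon> \<Phi> x\<bar> \<le> 2 * \<Phi> * \<epsilon> * \<beta> * M1 * R"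
proof -
  have x: "x \<in> log_region"
    using assms(1) by (simp add: cutoff_support_def)
  have pos: "0 < top_gap x" "0 < mid_gap x"
    using x by (auto simp: log_region_def)
  have iP: "\<bar>1 / top_gap x\<bar> \<le> R" and iQ: "\<bar>1 / mid_gap x\<bar> \<le> R"
    using cutoff_support_gap_bounds[OF assms(1,2)] pos by (simp_all add: R_def)
  have m: "\<bar>mean_slope (fst x)\<bar> \<le> \<beta>"
    using \<beta>[of "fst x"] by (simp add: mean_slope_def)
  have "\<bar>deriv f2 (fst x) / top_gap x + mean_slope (fst x) / mid_gap x\<bar> \<le> \<beta> * R + \<beta> * R"
    using abs_divide_le_mult[OF \<beta>(2) iP] abs_divide_le_mult[OF m iQ]
    by (intro order_trans[OF abs_triangle_ineq] add_mono)
  then have "\<bar>flux_g2 f1 f2 \<mu> \<epsilon> \<Phi> x\<bar> \<le> \<Phi> * \<epsilon> * M1 * (2 * \<beta> * R)"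
    using assms(2,3) M1[of "cutoff_arg \<epsilon> x"] unfolding flux_g_log_region[OF x] abs_minus_cancel
    by (intro abs_mult_le_mult) (auto simp: abs_mult mult_ac)
  then show ?thesis
    by (simp add: algebra_simps)
qed

lemma second_derivative_bounds:
  assumes \<Gamma>: "\<And>t. \<bar>deriv (deriv f1) t * (f2 t - f1 t)\<bar> \<le> \<Gamma>" "\<And>t. \<bar>deriv (deriv f2) t * (f2 t - f1 t)\<bar> \<le> \<Gamma>"
    and "1 / (f2 t - f1 t) \<le> R"
  shows "\<bar>deriv (deriv f2) t\<bar> \<le> \<Gamma> * R" "\<bar>mean_curvature t\<bar> \<le> \<Gamma> * R"
proof -
  have "\<bar>deriv (deriv f) t\<bar> \<le> \<Gamma> * R" if "\<bar>deriv (deriv f) t * (f2 t - f1 t)\<bar> \<le> \<Gamma>" for f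
  proof -
    have "\<bar>deriv (deriv f) t\<bar> = \<bar>deriv (deriv f) t * (f2 t - f1 t)\<bar> * (1 / (f2 t - f1 t))"
      using width_pos[of t] by (simp add: abs_mult)
    also have "\<dots> \<le> \<Gamma> * R"
      using that assms(3) width_pos[of t] by (intro mult_mono) auto
    finally show ?thesis .
  qed
  then have "\<bar>deriv (deriv f1) t\<bar> \<le> \<Gamma> * R" "\<bar>deriv (deriv f2) t\<bar> \<le> \<Gamma> * R"
    using \<Gamma> by blast+
  then show "\<bar>deriv (deriv f2) t\<bar> \<le> \<Gamma> * R" "\<bar>mean_curvature t\<bar> \<le> \<Gamma> * R"
    by (auto simp: mean_curvature_def abs_le_iff)
qed

lemma pd_flux_g_bounds_on_support:
  assumes "x \<in> cutoff_support \<epsilon>" "0 < \<epsilon>" "\<epsilon> \<le> 1" "0 \<le> \<Phi>"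
    and M: "\<And>s. \<bar>deriv \<mu> s\<bar> \<le> M1" "\<And>s. \<bar>deriv (deriv \<mu>) s\<bar> \<le> M2"
    and \<beta>: "1 \<le> \<beta>" "\<And>t. \<bar>deriv f1 t\<bar> \<le> \<beta>" "\<And>t. \<bar>deriv f2 t\<bar> \<le> \<beta>"
    and \<Gamma>: "\<And>t. \<bar>deriv (deriv f1) t * (f2 t - f1 t)\<bar> \<le> \<Gamma>" "\<And>t. \<bar>deriv (deriv f2) t * (f2 t - f1 t)\<bar> \<le> \<Gamma>"
  defines "K \<equiv> 4 * \<beta>\<^sup>2 * M2 + (2 * \<Gamma> + 2 * \<beta>\<^sup>2) * M1"
    and "R \<equiv> 4 / (exp (- 1 / \<epsilon>) * (f2 (fst x) - f1 (fst x)))"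
  shows "\<bar>pd1 (flux_g1 f1 f2 \<mu> \<epsilon> \<Phi>) x\<bar> \<le> \<Phi> * K * R\<^sup>2" "\<bar>pd2 (flux_g1 f1 f2 \<mu> \<epsilon> \<Phi>) x\<bar> \<le> \<Phi> * K * R\<^sup>2"
    and "\<bar>pd1 (flux_g2 f1 f2 \<mu> \<epsilon> \<Phi>) x\<bar> \<le> \<Phi> * K * R\<^sup>2" "\<bar>pd2 (flux_g2 f1 f2 \<mu> \<epsilon> \<Phi>) x\<bar> \<le> \<Phi> * K * R\<^sup>2"
proof -
  have x: "x \<in> log_region"
    using assms(1) by (simp add: cutoff_support_def)
  have gaps: "\<bar>1 / top_gap x\<bar> \<le> R" "\<bar>1 / mid_gap x\<bar> \<le> R"
    using cutoff_support_gap_bounds[OF assms(1,2)] x by (simp_all add: log_region_def R_def)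
  have slopes: "\<bar>deriv f2 (fst x)\<bar> \<le> \<beta>" "\<bar>mean_slope (fst x)\<bar> \<le> \<beta>"
    using \<beta>(2,3)[of "fst x"] by (auto simp: mean_slope_def abs_le_iff)
  have width: "1 / (f2 (fst x) - f1 (fst x)) \<le> R"
    unfolding R_def using width_pos[of "fst x"] assms(2)
    by (intro frac_le) (auto intro: mult_left_le_one_le)
  have "0 \<le> \<Gamma>"
    using \<Gamma>(1)[of 0] by simp
  note factors = gap_quotient_bounds[OF gaps slopes \<beta>(1) second_derivative_bounds[OF \<Gamma> width] this]
  note chain = abs_chain_term_le[OF M _ _ _ less_imp_le[OF assms(2)] assms(3,4)]
  show "\<bar>pd1 (flux_g1 f1 f2 \<mu> \<epsilon> \<Phi>) x\<bar> \<le> \<Phi> * K * R\<^sup>2" "\<bar>pd2 (flux_g1 f1 f2 \<mu> \<epsilon> \<Phi>) x\<bar> \<le> \<Phi> * K * R\<^sup>2"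
    and "\<bar>pd1 (flux_g2 f1 f2 \<mu> \<epsilon> \<Phi>) x\<bar> \<le> \<Phi> * K * R\<^sup>2" "\<bar>pd2 (flux_g2 f1 f2 \<mu> \<epsilon> \<Phi>) x\<bar> \<le> \<Phi> * K * R\<^sup>2"
    unfolding pd_flux_g1_log_region[OF x] pd_flux_g2_log_region[OF x] abs_minus_cancel K_def
    by (rule chain[OF factors(1,2,3)] chain[OF factors(2,2,4)]
        chain[OF factors(1,1,5)] chain[OF factors(2,1,3)])+
qed

section \<open>The weighted Hardy estimate\<close>

lemma open_Omega_ab: "open (Omega_ab f1 f2 a b)"
proof -
  have "Omega_ab f1 f2 a b
      = {x. f1 (fst x) < snd x} \<inter> {x. snd x < f2 (fst x)} \<inter> {x. a < fst x} \<inter> {x. fst x < b}"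
    unfolding Omega_ab_def Omega_def by auto
  then show ?thesis
    by (simp only:) (intro open_Int open_Collect_less continuous_intros)
qed

lemma hardy_inequality_slice:
  assumes "C1_with_grad \<phi> p1 p2" "\<forall>x\<in>S2_ab f2 a b. \<phi> x = 0"
  shows "(\<integral>\<^sup>+y. indicator (Omega_ab f1 f2 a b) (t, y) * ennreal ((\<phi> (t, y) / top_gap (t, y))\<^sup>2) \<partial>lborel)
    \<le> 4 * (\<integral>\<^sup>+y. indicator (Omega_ab f1 f2 a b) (t, y) * ennreal ((p2 (t, y))\<^sup>2) \<partial>lborel)"
proof (cases "a < t \<and> t < b")
  case True
  then have slice: "indicator (Omega_ab f1 f2 a b) (t, y) = (indicator {f1 t<..<f2 t} y :: ennreal)" for y
    by (simp add: Omega_ab_def Omega_def split: split_indicator)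
  have "continuous_on UNIV p2"
    using assms(1) by (simp add: C1_with_grad_def)
  then have "continuous_on {f1 t..f2 t} (\<lambda>y. p2 (t, y))"
    by (rule continuous_on_compose2) (auto intro: continuous_on_Pair continuous_on_const continuous_on_id)
  moreover have "\<phi> (t, f2 t) = 0"
    using assms(2) True by (auto simp: S2_ab_def)
  moreover have "f1 t < f2 t"
    using width_pos[of t] by simp
  ultimately show ?thesis
    unfolding slice top_gap_def fst_conv snd_conv
    by (intro hardy_inequality C1_with_grad_has_real_derivative_snd[OF assms(1)])
next
  case False
  then have "(t, y) \<notin> Omega_ab f1 f2 a b" for y
    unfolding Omega_ab_def by auto
  then show ?thesis by simp
qed

lemma hardy_inequality_Omega_ab:
  assumes "C1_with_grad \<phi> p1 p2" "\<forall>x\<in>S2_ab f2 a b. \<phi> x = 0"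
  shows "(\<integral>\<^sup>+x. indicator (Omega_ab f1 f2 a b) x * ennreal ((\<phi> x / top_gap x)\<^sup>2) \<partial>lebesgue)
    \<le> 4 * sqint (Omega_ab f1 f2 a b) p2"
proof -
  let ?U = "Omega_ab f1 f2 a b"
  have U: "?U \<in> sets borel"
    using open_Omega_ab by auto
  have "continuous_on UNIV top_gap"
    unfolding top_gap_def by (intro continuous_intros)
  moreover have "continuous_on UNIV \<phi>"
    by (rule C1_with_grad_continuous[OF assms(1)])
  moreover have "continuous_on UNIV p2"
    using assms(1) by (simp add: C1_with_grad_def)
  ultimately have borel: "top_gap \<in> borel_measurable borel" "\<phi> \<in> borel_measurable borel"
      "p2 \<in> borel_measurable borel"
    by (simp_all add: borel_measurable_continuous_onI)
  note meas = borel_measurable_indicator_mult_ennreal[OF U borel_measurable_power[OF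
        borel_measurable_divide[OF borel(2,1)]]]
      borel_measurable_indicator_mult_ennreal[OF U borel_measurable_power[OF borel(3)]]
  have "(\<lambda>t. \<integral>\<^sup>+y. indicator ?U (t, y) * ennreal ((p2 (t, y))\<^sup>2) \<partial>lborel) \<in> borel_measurable lborel"
    using lborel.borel_measurable_nn_integral_fst[of "\<lambda>x. indicator ?U x * ennreal ((p2 x)\<^sup>2)"] meas(2)
    by (simp add: lborel_prod)
  then show ?thesis
    unfolding sqint_def nn_integral_lebesgue_pair[OF meas(1)] nn_integral_lebesgue_pair[OF meas(2)]
    by (simp add: nn_integral_cmult[symmetric] nn_integral_mono hardy_inequality_slice[OF assms])
qed

lemma flux_g1_weighted_square_le:
  assumes "0 < \<epsilon>" "0 \<le> \<Phi>" "x \<in> Omega f1 f2" and M1: "\<And>s. \<bar>deriv \<mu> s\<bar> \<le> M1"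
    and d: "0 < d" "\<And>t. d \<le> f2 t - f1 t"
  defines "c \<equiv> 2 * \<Phi> * \<epsilon> * M1"
  defines "B \<equiv> c * (4 / (exp (- 1 / \<epsilon>) * d))"
  shows "(flux_g1 f1 f2 \<mu> \<epsilon> \<Phi> x)\<^sup>2 * w\<^sup>2 \<le> 2 * B\<^sup>2 * (\<phi> - w)\<^sup>2 + 2 * c\<^sup>2 * (\<phi> / top_gap x)\<^sup>2"
proof -
  have "\<bar>flux_g1 f1 f2 \<mu> \<epsilon> \<Phi> x\<bar> \<le> B \<and> \<bar>flux_g1 f1 f2 \<mu> \<epsilon> \<Phi> x\<bar> \<le> c / top_gap x"
  proof (cases "x \<in> cutoff_support \<epsilon>")
    case True
    have "4 / (exp (- 1 / \<epsilon>) * (f2 (fst x) - f1 (fst x))) \<le> 4 / (exp (- 1 / \<epsilon>) * d)"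
      using d width_pos[of "fst x"] by (intro divide_left_mono mult_left_mono mult_pos_pos) auto
    then have "c * (4 / (exp (- 1 / \<epsilon>) * (f2 (fst x) - f1 (fst x)))) \<le> B"
      using assms(1,2) M1[of 0] unfolding B_def c_def by (intro mult_left_mono) auto
    then show ?thesis
      using flux_g1_bounds_on_support[OF True assms(1,2) M1, folded c_def] by linarith
  next
    case False
    have "0 < top_gap x"
      using assms(3) by (simp add: Omega_def top_gap_def)
    then show ?thesis
      using flux_vanishes_off_support(1)[OF assms(1,3) False] assms(1,2) M1[of 0] d(1)
      by (simp add: B_def c_def)
  qed
  then show ?thesis
    by (intro weighted_square_le) auto
qed

lemma flux_g1_weighted_le:
  fixes w :: "real \<times> real \<Rightarrow> real"
  assumes "0 < \<epsilon>" "0 \<le> \<Phi>" and M1: "\<And>s. \<bar>deriv \<mu> s\<bar> \<le> M1"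
    and d: "0 < d" "\<And>t. d \<le> f2 t - f1 t"
    and \<phi>: "continuous_on UNIV \<phi>"
    and w: "(\<lambda>x. indicator (Omega_ab f1 f2 a b) x * w x) \<in> borel_measurable lebesgue"
  defines "U \<equiv> Omega_ab f1 f2 a b" and "c \<equiv> 2 * \<Phi> * \<epsilon> * M1"
  defines "B \<equiv> c * (4 / (exp (- 1 / \<epsilon>) * d))"
  shows "(\<integral>\<^sup>+x. indicator U x * ennreal ((flux_g1 f1 f2 \<mu> \<epsilon> \<Phi> x)\<^sup>2 * (w x)\<^sup>2) \<partial>lebesgue)
    \<le> ennreal (2 * B\<^sup>2) * sqint U (\<lambda>x. \<phi> x - w x)
      + ennreal (2 * c\<^sup>2) * (\<integral>\<^sup>+x. indicator U x * ennreal ((\<phi> x / top_gap x)\<^sup>2) \<partial>lebesgue)"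
proof -
  have U: "U \<in> sets borel"
    using open_Omega_ab by (auto simp: U_def)
  have "continuous_on UNIV top_gap"
    unfolding top_gap_def by (intro continuous_intros)
  then have borel: "\<phi> \<in> borel_measurable borel" "top_gap \<in> borel_measurable borel"
    using \<phi> by (simp_all add: borel_measurable_continuous_onI)
  have meas: "(\<lambda>x. indicator U x * ennreal ((\<phi> x - w x)\<^sup>2)) \<in> borel_measurable lebesgue"
      "(\<lambda>x. indicator U x * ennreal ((\<phi> x / top_gap x)\<^sup>2)) \<in> borel_measurable lebesgue"
    using lebesgue_measurable_indicator_mult_square_diff[OF
        lebesgue_measurable_indicator_mult[OF U borel(1)] w[folded U_def]]
      borel_measurable_lebesgueI[OF borel_measurable_indicator_mult_ennreal[OF U
        borel_measurable_power[OF borel_measurable_divide[OF borel]]]]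
    by simp_all
  have "indicator U x * ennreal ((flux_g1 f1 f2 \<mu> \<epsilon> \<Phi> x)\<^sup>2 * (w x)\<^sup>2)
      \<le> ennreal (2 * B\<^sup>2) * (indicator U x * ennreal ((\<phi> x - w x)\<^sup>2))
        + ennreal (2 * c\<^sup>2) * (indicator U x * ennreal ((\<phi> x / top_gap x)\<^sup>2))" for x
  proof (cases "x \<in> U")
    case True
    then have "x \<in> Omega f1 f2"
      by (simp add: U_def Omega_ab_def)
    from flux_g1_weighted_square_le[OF assms(1,2) this M1 d, of "w x" "\<phi> x", folded c_def B_def]
    show ?thesis
      using True by (simp add: ennreal_plus[symmetric] ennreal_mult[symmetric] ennreal_leI del: ennreal_plus)
  qed simp
  then have "(\<integral>\<^sup>+x. indicator U x * ennreal ((flux_g1 f1 f2 \<mu> \<epsilon> \<Phi> x)\<^sup>2 * (w x)\<^sup>2) \<partial>lebesgue)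
      \<le> (\<integral>\<^sup>+x. ennreal (2 * B\<^sup>2) * (indicator U x * ennreal ((\<phi> x - w x)\<^sup>2))
        + ennreal (2 * c\<^sup>2) * (indicator U x * ennreal ((\<phi> x / top_gap x)\<^sup>2)) \<partial>lebesgue)"
    by (intro nn_integral_mono)
  also have "\<dots> = ennreal (2 * B\<^sup>2) * sqint U (\<lambda>x. \<phi> x - w x)
      + ennreal (2 * c\<^sup>2) * (\<integral>\<^sup>+x. indicator U x * ennreal ((\<phi> x / top_gap x)\<^sup>2) \<partial>lebesgue)"
    unfolding sqint_def using meas by (simp add: nn_integral_add nn_integral_cmult)
  finally show ?thesis .
qed

lemma flux_g1_weighted_approx:
  fixes w v2 :: "real \<times> real \<Rightarrow> real"
  assumes "0 < \<epsilon>" "0 \<le> \<Phi>" and M1: "\<And>s. \<bar>deriv \<mu> s\<bar> \<le> M1"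
    and d: "0 < d" "\<And>t. d \<le> f2 t - f1 t"
    and \<phi>: "C1_with_grad \<phi> q1 q2" "\<forall>x\<in>S2_ab f2 a b. \<phi> x = 0"
    and w: "(\<lambda>x. indicator (Omega_ab f1 f2 a b) x * w x) \<in> borel_measurable lebesgue"
    and v2: "(\<lambda>x. indicator (Omega_ab f1 f2 a b) x * v2 x) \<in> borel_measurable lebesgue"
  defines "U \<equiv> Omega_ab f1 f2 a b" and "c \<equiv> 2 * \<Phi> * \<epsilon> * M1"
  defines "B \<equiv> c * (4 / (exp (- 1 / \<epsilon>) * d))"
  shows "(\<integral>\<^sup>+x. indicator U x * ennreal ((flux_g1 f1 f2 \<mu> \<epsilon> \<Phi> x)\<^sup>2 * (w x)\<^sup>2) \<partial>lebesgue)
    \<le> ennreal (2 * B\<^sup>2) * sqint U (\<lambda>x. \<phi> x - w x)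
      + ennreal (2 * c\<^sup>2) * (4 * (2 * sqint U v2 + 2 * sqint U (\<lambda>x. q2 x - v2 x)))"
proof -
  have "continuous_on UNIV q2"
    using \<phi>(1) by (simp add: C1_with_grad_def)
  then have "(\<lambda>x. indicator U x * q2 x) \<in> borel_measurable lebesgue"
    using open_Omega_ab
    by (auto simp: U_def intro!: lebesgue_measurable_indicator_mult borel_measurable_continuous_onI)
  then have "(\<integral>\<^sup>+x. indicator U x * ennreal ((\<phi> x / top_gap x)\<^sup>2) \<partial>lebesgue)
      \<le> 4 * (2 * sqint U v2 + 2 * sqint U (\<lambda>x. q2 x - v2 x))"
    using hardy_inequality_Omega_ab[OF \<phi>, folded U_def] sqint_le_diff[OF _ v2[folded U_def]]
    by (meson mult_left_mono order_trans zero_le_numeral)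
  then show ?thesis
    using flux_g1_weighted_le[OF assms(1,2) M1 d C1_with_grad_continuous[OF \<phi>(1)] w, folded U_def c_def B_def]
    by (meson add_left_mono mult_left_mono order_trans zero_le)
qed

lemma flux_g1_weighted_hardy:
  "\<exists>C. \<forall>\<epsilon> \<Phi> a b w v1 v2.
      0 < \<epsilon> \<and> \<epsilon> < 1 \<and> 0 \<le> \<Phi> \<and> a < b \<and>
      H1_weak (Omega_ab f1 f2 a b) w v1 v2 \<and>
      zero_trace_on (Omega_ab f1 f2 a b) (S2_ab f2 a b) w v1 v2 \<longrightarrow>
      (\<integral>\<^sup>+ x. indicator (Omega_ab f1 f2 a b) x *
           ennreal ((flux_g1 f1 f2 \<mu> \<epsilon> \<Phi> x)\<^sup>2 * (w x)\<^sup>2) \<partial>lebesgue)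
      \<le> ennreal (C * \<Phi>\<^sup>2 * \<epsilon>\<^sup>2) * sqint (Omega_ab f1 f2 a b) v2"
proof -
  obtain M1 M2 where M1: "\<And>s. \<bar>deriv \<mu> s\<bar> \<le> M1" and "\<And>s. \<bar>deriv (deriv \<mu>) s\<bar> \<le> M2"
    using cutoff_derivs_bounded by metis
  obtain d where d: "0 < d" "\<And>t. d \<le> f2 t - f1 t"
    using width_lower_bound by blast
  show ?thesis
  proof (intro exI[of _ "64 * M1\<^sup>2"] allI impI, elim conjE)
    fix \<epsilon> \<Phi> a b :: real and w v1 v2 :: "real \<times> real \<Rightarrow> real"
    assume \<epsilon>: "0 < \<epsilon>" "\<epsilon> < 1" and \<Phi>: "0 \<le> \<Phi>" and "a < b"
      and H1: "H1_weak (Omega_ab f1 f2 a b) w v1 v2"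
      and trace: "zero_trace_on (Omega_ab f1 f2 a b) (S2_ab f2 a b) w v1 v2"
    let ?U = "Omega_ab f1 f2 a b"
    define c B where "c = 2 * \<Phi> * \<epsilon> * M1" and "B = c * (4 / (exp (- 1 / \<epsilon>) * d))"
    obtain \<phi> q1 q2 where \<phi>: "\<And>n. C1_with_grad (\<phi> n) (q1 n) (q2 n)" "\<And>n. \<forall>x\<in>S2_ab f2 a b. \<phi> n x = 0"
      and lim_\<phi>: "(\<lambda>n. sqint ?U (\<lambda>x. \<phi> n x - w x)) \<longlonglongrightarrow> 0"
      and lim_q2: "(\<lambda>n. sqint ?U (\<lambda>x. q2 n x - v2 x)) \<longlonglongrightarrow> 0"
      using trace unfolding zero_trace_on_def by blast
    have "(\<lambda>x. indicator ?U x * w x) \<in> borel_measurable lebesgue"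
      "(\<lambda>x. indicator ?U x * v2 x) \<in> borel_measurable lebesgue"
      using H1 unfolding H1_weak_def by auto
    note approx = flux_g1_weighted_approx[OF \<epsilon>(1) \<Phi> M1 d \<phi> this, folded c_def B_def]
    have "(\<lambda>n. ennreal (2 * B\<^sup>2) * sqint ?U (\<lambda>x. \<phi> n x - w x)
          + ennreal (2 * c\<^sup>2) * (4 * (2 * sqint ?U v2 + 2 * sqint ?U (\<lambda>x. q2 n x - v2 x))))
        \<longlonglongrightarrow> ennreal (2 * B\<^sup>2) * 0 + ennreal (2 * c\<^sup>2) * (4 * (2 * sqint ?U v2 + 2 * 0))"
      using lim_\<phi> lim_q2 by (intro tendsto_add ennreal_tendsto_cmult tendsto_const) (auto simp: top_unique)
    then have "(\<integral>\<^sup>+ x. indicator ?U x * ennreal ((flux_g1 f1 f2 \<mu> \<epsilon> \<Phi> x)\<^sup>2 * (w x)\<^sup>2) \<partial>lebesgue)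
        \<le> ennreal (2 * c\<^sup>2) * (4 * (2 * sqint ?U v2))"
      using approx by (intro LIMSEQ_le_const) auto
    also have "\<dots> = ennreal (2 * c\<^sup>2 * 8) * sqint ?U v2"
      by (simp add: ennreal_mult' mult_ac)
    also have "2 * c\<^sup>2 * 8 = 64 * M1\<^sup>2 * \<Phi>\<^sup>2 * \<epsilon>\<^sup>2"
      by (simp add: c_def power_mult_distrib)
    finally show "(\<integral>\<^sup>+ x. indicator ?U x * ennreal ((flux_g1 f1 f2 \<mu> \<epsilon> \<Phi> x)\<^sup>2 * (w x)\<^sup>2) \<partial>lebesgue)
        \<le> ennreal (64 * M1\<^sup>2 * \<Phi>\<^sup>2 * \<epsilon>\<^sup>2) * sqint ?U v2" .
  qed
qed

section \<open>Pointwise and energy bounds\<close>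

lemma flux_norms_on_support:
  assumes "x \<in> cutoff_support \<epsilon>" "0 < \<epsilon>" "\<epsilon> \<le> 1" "0 \<le> \<Phi>"
    and M: "\<And>s. \<bar>deriv \<mu> s\<bar> \<le> M1" "\<And>s. \<bar>deriv (deriv \<mu>) s\<bar> \<le> M2"
    and \<beta>: "1 \<le> \<beta>" "\<And>t. \<bar>deriv f1 t\<bar> \<le> \<beta>" "\<And>t. \<bar>deriv f2 t\<bar> \<le> \<beta>"
    and \<Gamma>: "\<And>t. \<bar>deriv (deriv f1) t * (f2 t - f1 t)\<bar> \<le> \<Gamma>" "\<And>t. \<bar>deriv (deriv f2) t * (f2 t - f1 t)\<bar> \<le> \<Gamma>"
  defines "K \<equiv> 4 * \<beta>\<^sup>2 * M2 + (2 * \<Gamma> + 2 * \<beta>\<^sup>2) * M1"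
    and "R \<equiv> 4 / (exp (- 1 / \<epsilon>) * (f2 (fst x) - f1 (fst x)))"
  shows "flux_norm f1 f2 \<mu> \<epsilon> \<Phi> x \<le> 2 * (\<Phi> * K * R)"
    and "flux_grad_norm f1 f2 \<mu> \<epsilon> \<Phi> x \<le> 4 * (\<Phi> * K * R\<^sup>2)"
proof -
  have "0 \<le> M1" "0 \<le> M2" "0 \<le> \<Gamma>" "0 \<le> \<Phi> * R"
    using M[of 0] \<Gamma>(1)[of 0] assms(4) width_pos[of "fst x"] by (auto simp: R_def)
  moreover have "\<epsilon> \<le> \<beta>\<^sup>2" "\<epsilon> * \<beta> \<le> \<beta>\<^sup>2"
    using \<beta>(1) assms(2,3) mult_mono[of \<epsilon> \<beta> 1 \<beta>] mult_right_mono[of \<epsilon> \<beta> \<beta>]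
    by (simp_all add: power2_eq_square)
  ultimately have "2 * \<epsilon> * M1 \<le> 2 * \<beta>\<^sup>2 * M1" "2 * \<epsilon> * \<beta> * M1 \<le> 2 * \<beta>\<^sup>2 * M1"
      "0 \<le> 4 * \<beta>\<^sup>2 * M2" "0 \<le> \<Gamma> * M1" "0 \<le> \<beta>\<^sup>2 * M1" "0 \<le> \<Phi> * R"
    by (simp_all add: mult_right_mono)
  then have "2 * \<epsilon> * M1 \<le> K" "2 * \<epsilon> * \<beta> * M1 \<le> K" "0 \<le> \<Phi> * R"
    unfolding K_def by (simp_all add: algebra_simps)
  then have "(2 * \<epsilon> * M1) * (\<Phi> * R) \<le> K * (\<Phi> * R)" "(2 * \<epsilon> * \<beta> * M1) * (\<Phi> * R) \<le> K * (\<Phi> * R)"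
    by (simp_all add: mult_right_mono)
  then have "2 * \<Phi> * \<epsilon> * M1 * R \<le> \<Phi> * K * R" "2 * \<Phi> * \<epsilon> * \<beta> * M1 * R \<le> \<Phi> * K * R"
    by (simp_all add: mult_ac)
  then have "\<bar>flux_g1 f1 f2 \<mu> \<epsilon> \<Phi> x\<bar> \<le> \<Phi> * K * R" "\<bar>flux_g2 f1 f2 \<mu> \<epsilon> \<Phi> x\<bar> \<le> \<Phi> * K * R"
    using flux_g1_bounds_on_support(2)[OF assms(1,2,4) M(1)]
      flux_g2_bound_on_support[OF assms(1,2,4) M(1) \<beta>(2,3)]
    by (simp_all add: R_def)
  moreover have "flux_norm f1 f2 \<mu> \<epsilon> \<Phi> x \<le> \<bar>flux_g1 f1 f2 \<mu> \<epsilon> \<Phi> x\<bar> + \<bar>flux_g2 f1 f2 \<mu> \<epsilon> \<Phi> x\<bar>"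
    unfolding flux_norm_def by (rule sqrt_sum_squares_le_sum_abs)
  ultimately show "flux_norm f1 f2 \<mu> \<epsilon> \<Phi> x \<le> 2 * (\<Phi> * K * R)"
    by linarith
  have "flux_grad_norm f1 f2 \<mu> \<epsilon> \<Phi> x
      \<le> \<bar>pd1 (flux_g1 f1 f2 \<mu> \<epsilon> \<Phi>) x\<bar> + \<bar>pd2 (flux_g1 f1 f2 \<mu> \<epsilon> \<Phi>) x\<bar>
        + \<bar>pd1 (flux_g2 f1 f2 \<mu> \<epsilon> \<Phi>) x\<bar> + \<bar>pd2 (flux_g2 f1 f2 \<mu> \<epsilon> \<Phi>) x\<bar>"
    unfolding flux_grad_norm_def by (rule sqrt_sum4_squares_le_sum_abs)
  then show "flux_grad_norm f1 f2 \<mu> \<epsilon> \<Phi> x \<le> 4 * (\<Phi> * K * R\<^sup>2)"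
    using pd_flux_g_bounds_on_support[OF assms(1-4) M \<beta> \<Gamma>, folded K_def R_def] by linarith
qed

lemma flux_pointwise_bounds:
  assumes "\<And>t. \<bar>deriv (deriv f1) t * (f2 t - f1 t)\<bar> \<le> \<Gamma>" "\<And>t. \<bar>deriv (deriv f2) t * (f2 t - f1 t)\<bar> \<le> \<Gamma>"
    and "0 < \<epsilon>" "\<epsilon> < 1"
  obtains c where "1 \<le> c"
    and "\<And>\<Phi> x. 0 \<le> \<Phi> \<Longrightarrow> x \<in> Omega f1 f2 \<Longrightarrow>
      flux_norm f1 f2 \<mu> \<epsilon> \<Phi> x \<le> c * \<Phi> / (f2 (fst x) - f1 (fst x))"
    and "\<And>\<Phi> x. 0 \<le> \<Phi> \<Longrightarrow> x \<in> Omega f1 f2 \<Longrightarrow>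
      flux_grad_norm f1 f2 \<mu> \<epsilon> \<Phi> x \<le> c * \<Phi> / (f2 (fst x) - f1 (fst x))\<^sup>2"
proof -
  obtain \<beta> where \<beta>: "1 \<le> \<beta>" "\<And>t. \<bar>deriv f1 t\<bar> \<le> \<beta>" "\<And>t. \<bar>deriv f2 t\<bar> \<le> \<beta>"
    using slope_bound by metis
  obtain M1 M2 where M: "\<And>s. \<bar>deriv \<mu> s\<bar> \<le> M1" "\<And>s. \<bar>deriv (deriv \<mu>) s\<bar> \<le> M2"
    using cutoff_derivs_bounded by metis
  define \<delta> K where "\<delta> = exp (- 1 / \<epsilon>)" and "K = 4 * \<beta>\<^sup>2 * M2 + (2 * \<Gamma> + 2 * \<beta>\<^sup>2) * M1"
  define c where "c = max 1 (max (8 * K / \<delta>) (64 * K / \<delta>\<^sup>2))"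
  have "flux_norm f1 f2 \<mu> \<epsilon> \<Phi> x \<le> c * \<Phi> / (f2 (fst x) - f1 (fst x))
      \<and> flux_grad_norm f1 f2 \<mu> \<epsilon> \<Phi> x \<le> c * \<Phi> / (f2 (fst x) - f1 (fst x))\<^sup>2"
    if "0 \<le> \<Phi>" "x \<in> Omega f1 f2" for \<Phi> x
  proof (cases "x \<in> cutoff_support \<epsilon>")
    case True
    define F where "F = f2 (fst x) - f1 (fst x)"
    have "0 < F"
      using width_pos by (simp add: F_def)
    have "2 * (\<Phi> * K * (4 / (\<delta> * F))) = 8 * K / \<delta> * \<Phi> / F"
      "4 * (\<Phi> * K * (4 / (\<delta> * F))\<^sup>2) = 64 * K / \<delta>\<^sup>2 * \<Phi> / F\<^sup>2"
      by (simp_all add: power2_eq_square field_simps)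
    moreover have "8 * K / \<delta> \<le> c" "64 * K / \<delta>\<^sup>2 \<le> c"
      by (simp_all add: c_def)
    then have "8 * K / \<delta> * \<Phi> / F \<le> c * \<Phi> / F" "64 * K / \<delta>\<^sup>2 * \<Phi> / F\<^sup>2 \<le> c * \<Phi> / F\<^sup>2"
      using \<open>0 < F\<close> by (intro divide_right_mono mult_right_mono that(1); simp)+
    ultimately show ?thesis
      using flux_norms_on_support[OF True assms(3) less_imp_le[OF assms(4)] that(1) M \<beta> assms(1,2),
          folded K_def \<delta>_def F_def]
      by (simp only: F_def[symmetric]) (intro conjI; linarith)
  next
    case False
    then show ?thesis
      using flux_vanishes_off_support[OF assms(3) that(2) False] that width_pos[of "fst x"]
      by (simp add: flux_norm_def flux_grad_norm_def c_def)
  qed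
  then show ?thesis
    using that[of c] by (simp add: c_def)
qed

lemma nn_integral_Omega_ab_width_power:
  assumes "0 \<le> k"
  shows "(\<integral>\<^sup>+x. indicator (Omega_ab f1 f2 a b) x * ennreal (k / (f2 (fst x) - f1 (fst x)) ^ 4) \<partial>lebesgue)
    = ennreal k * (\<integral>\<^sup>+t. indicator {a<..<b} t * ennreal (1 / (f2 t - f1 t) ^ 3) \<partial>lebesgue)"
proof -
  have slice: "(\<integral>\<^sup>+y. indicator (Omega_ab f1 f2 a b) (t, y) * ennreal (k / (f2 t - f1 t) ^ 4) \<partial>lborel)
      = ennreal k * (indicator {a<..<b} t * ennreal (1 / (f2 t - f1 t) ^ 3))" for t
  proof (cases "a < t \<and> t < b")
    case True
    have "(\<lambda>y. indicator (Omega_ab f1 f2 a b) (t, y) * ennreal (k / (f2 t - f1 t) ^ 4))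
        = (\<lambda>y. ennreal (k / (f2 t - f1 t) ^ 4) * indicator {f1 t<..<f2 t} y)"
      using True by (auto simp: Omega_ab_def Omega_def fun_eq_iff split: split_indicator)
    moreover have "k / F ^ 4 * F = k * (1 / F ^ 3)" if "F \<noteq> 0" for F :: real
      using that by (simp add: field_simps eval_nat_numeral)
    then have "k / (f2 t - f1 t) ^ 4 * (f2 t - f1 t) = k * (1 / (f2 t - f1 t) ^ 3)"
      using width_pos[of t] by simp
    ultimately show ?thesis
      using True width_pos[of t] assms by (simp add: nn_integral_cmult_indicator ennreal_mult[symmetric])
  next
    case False
    then show ?thesis
      by (simp add: Omega_ab_def)
  qed
  have "continuous_on UNIV (\<lambda>t. 1 / (f2 t - f1 t) ^ 3)"
    using width_pos by (intro continuous_intros) (auto simp: less_imp_neq[symmetric])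
  then have meas: "(\<lambda>t. indicator {a<..<b} t * ennreal (1 / (f2 t - f1 t) ^ 3)) \<in> borel_measurable borel"
    by (intro borel_measurable_indicator_mult_ennreal borel_measurable_continuous_onI) auto
  have "continuous_on UNIV (\<lambda>x. k / (f2 (fst x) - f1 (fst x)) ^ 4)"
    using width_pos by (intro continuous_intros) (auto simp: less_imp_neq[symmetric])
  then have meas2: "(\<lambda>x. indicator (Omega_ab f1 f2 a b) x * ennreal (k / (f2 (fst x) - f1 (fst x)) ^ 4))
      \<in> borel_measurable borel"
    using open_Omega_ab by (intro borel_measurable_indicator_mult_ennreal borel_measurable_continuous_onI) auto
  show ?thesis
    unfolding nn_integral_lebesgue_pair[OF meas2] fst_conv slice
    using meas by (simp add: nn_integral_cmult nn_integral_completion)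
qed

lemma nn_integral_flux_energy_le:
  assumes "1 \<le> c" "0 \<le> \<Phi>"
    and norm: "\<And>x. x \<in> Omega f1 f2 \<Longrightarrow> flux_norm f1 f2 \<mu> \<epsilon> \<Phi> x \<le> c * \<Phi> / (f2 (fst x) - f1 (fst x))"
    and grad: "\<And>x. x \<in> Omega f1 f2 \<Longrightarrow> flux_grad_norm f1 f2 \<mu> \<epsilon> \<Phi> x \<le> c * \<Phi> / (f2 (fst x) - f1 (fst x))\<^sup>2"
  shows "(\<integral>\<^sup>+ x. indicator (Omega_ab f1 f2 a b) x *
      ennreal ((flux_grad_norm f1 f2 \<mu> \<epsilon> \<Phi> x)\<^sup>2 + (flux_norm f1 f2 \<mu> \<epsilon> \<Phi> x) ^ 4) \<partial>lebesgue)
    \<le> ennreal (c ^ 4 * (\<Phi>\<^sup>2 + \<Phi> ^ 4)) *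
      (\<integral>\<^sup>+ t. indicator {a<..<b} t * ennreal (1 / (f2 t - f1 t) ^ 3) \<partial>lebesgue)"
proof -
  have "(flux_grad_norm f1 f2 \<mu> \<epsilon> \<Phi> x)\<^sup>2 + (flux_norm f1 f2 \<mu> \<epsilon> \<Phi> x) ^ 4
      \<le> c ^ 4 * (\<Phi>\<^sup>2 + \<Phi> ^ 4) / (f2 (fst x) - f1 (fst x)) ^ 4" if "x \<in> Omega f1 f2" for x
    using norm[OF that] grad[OF that] assms(1,2) width_pos[of "fst x"]
    by (intro energy_density_le) (simp_all add: flux_norm_def flux_grad_norm_def)
  then have "indicator (Omega_ab f1 f2 a b) x
        * ennreal ((flux_grad_norm f1 f2 \<mu> \<epsilon> \<Phi> x)\<^sup>2 + (flux_norm f1 f2 \<mu> \<epsilon> \<Phi> x) ^ 4)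
      \<le> indicator (Omega_ab f1 f2 a b) x * ennreal (c ^ 4 * (\<Phi>\<^sup>2 + \<Phi> ^ 4) / (f2 (fst x) - f1 (fst x)) ^ 4)"
    for x
    by (cases "x \<in> Omega_ab f1 f2 a b") (simp_all add: Omega_ab_def ennreal_leI del: ennreal_plus)
  then have "(\<integral>\<^sup>+ x. indicator (Omega_ab f1 f2 a b) x *
        ennreal ((flux_grad_norm f1 f2 \<mu> \<epsilon> \<Phi> x)\<^sup>2 + (flux_norm f1 f2 \<mu> \<epsilon> \<Phi> x) ^ 4) \<partial>lebesgue)
      \<le> (\<integral>\<^sup>+ x. indicator (Omega_ab f1 f2 a b) x *
        ennreal (c ^ 4 * (\<Phi>\<^sup>2 + \<Phi> ^ 4) / (f2 (fst x) - f1 (fst x)) ^ 4) \<partial>lebesgue)"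
    by (intro nn_integral_mono)
  also have "\<dots> = ennreal (c ^ 4 * (\<Phi>\<^sup>2 + \<Phi> ^ 4)) *
      (\<integral>\<^sup>+ t. indicator {a<..<b} t * ennreal (1 / (f2 t - f1 t) ^ 3) \<partial>lebesgue)"
    using assms(1,2) by (intro nn_integral_Omega_ab_width_power) simp
  finally show ?thesis .
qed

lemma flux_energy_bounds:
  assumes "bounded (range (\<lambda>t. deriv (deriv f1) t * (f2 t - f1 t)))"
    and "bounded (range (\<lambda>t. deriv (deriv f2) t * (f2 t - f1 t)))"
    and "0 < \<epsilon>" "\<epsilon> < 1"
  shows "\<exists>C. \<forall>\<Phi>. 0 \<le> \<Phi> \<longrightarrow>
      (\<forall>x\<in>Omega f1 f2.
         flux_norm f1 f2 \<mu> \<epsilon> \<Phi> x \<le> C * \<Phi> / (f2 (fst x) - f1 (fst x)) \<and>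
         flux_grad_norm f1 f2 \<mu> \<epsilon> \<Phi> x \<le> C * \<Phi> / (f2 (fst x) - f1 (fst x))\<^sup>2) \<and>
      (\<forall>a b. a < b \<longrightarrow>
         (\<integral>\<^sup>+ x. indicator (Omega_ab f1 f2 a b) x *
              ennreal ((flux_grad_norm f1 f2 \<mu> \<epsilon> \<Phi> x)\<^sup>2 +
                       (flux_norm f1 f2 \<mu> \<epsilon> \<Phi> x) ^ 4) \<partial>lebesgue)
         \<le> ennreal (C * (\<Phi>\<^sup>2 + \<Phi> ^ 4)) *
            (\<integral>\<^sup>+ t. indicator {a<..<b} t * ennreal (1 / (f2 t - f1 t) ^ 3) \<partial>lebesgue))"
proof -
  obtain \<Gamma> where "\<And>t. \<bar>deriv (deriv f1) t * (f2 t - f1 t)\<bar> \<le> \<Gamma>"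
      "\<And>t. \<bar>deriv (deriv f2) t * (f2 t - f1 t)\<bar> \<le> \<Gamma>"
    using curvature_bound assms(1,2) by metis
  then obtain c where c: "1 \<le> c"
    and norm: "\<And>\<Phi> x. 0 \<le> \<Phi> \<Longrightarrow> x \<in> Omega f1 f2 \<Longrightarrow>
      flux_norm f1 f2 \<mu> \<epsilon> \<Phi> x \<le> c * \<Phi> / (f2 (fst x) - f1 (fst x))"
    and grad: "\<And>\<Phi> x. 0 \<le> \<Phi> \<Longrightarrow> x \<in> Omega f1 f2 \<Longrightarrow>
      flux_grad_norm f1 f2 \<mu> \<epsilon> \<Phi> x \<le> c * \<Phi> / (f2 (fst x) - f1 (fst x))\<^sup>2"
    using flux_pointwise_bounds assms(3,4) by blast
  have "c \<le> c ^ 4"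
    using power_increasing[of 1 4 c] c by simp
  then have "c * \<Phi> / F \<le> c ^ 4 * \<Phi> / F" if "0 \<le> \<Phi>" "0 < F" for \<Phi> F :: real
    using that by (intro divide_right_mono mult_right_mono) auto
  then show ?thesis
    using norm grad width_pos nn_integral_flux_energy_le[OF c _ norm grad]
    by (intro exI[of _ "c ^ 4"]) (meson order_trans zero_less_power)
qed

end

theorem lemma3p1:
  fixes f1 f2 \<mu> :: "real \<Rightarrow> real"
  assumes f1_smooth: "smooth_fun f1" and f2_smooth: "smooth_fun f2"
    and d_pos: "\<exists>d>0. \<forall>t. d \<le> f2 t - f1 t"
    and beta_fin: "bounded (range (deriv f1))" "bounded (range (deriv f2))"
    and mu_smooth: "smooth_fun \<mu>"
    and mu_1: "\<forall>t\<ge>1. \<mu> t = 0" and mu_0: "\<forall>t\<le>0. \<mu> t = 1"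
  shows
    "(\<exists>C. \<forall>\<epsilon> \<Phi> a b w v1 v2.
        0 < \<epsilon> \<and> \<epsilon> < 1 \<and> 0 \<le> \<Phi> \<and> a < b \<and>
        H1_weak (Omega_ab f1 f2 a b) w v1 v2 \<and>
        zero_trace_on (Omega_ab f1 f2 a b) (S2_ab f2 a b) w v1 v2 \<longrightarrow>
        (\<integral>\<^sup>+ x. indicator (Omega_ab f1 f2 a b) x *
             ennreal ((flux_g1 f1 f2 \<mu> \<epsilon> \<Phi> x)\<^sup>2 * (w x)\<^sup>2) \<partial>lebesgue)
        \<le> ennreal (C * \<Phi>\<^sup>2 * \<epsilon>\<^sup>2) * sqint (Omega_ab f1 f2 a b) v2)
     \<and>
     (bounded (range (\<lambda>t. deriv (deriv f1) t * (f2 t - f1 t))) \<and>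
      bounded (range (\<lambda>t. deriv (deriv f2) t * (f2 t - f1 t))) \<longrightarrow>
      (\<forall>\<epsilon>. 0 < \<epsilon> \<and> \<epsilon> < 1 \<longrightarrow>
        (\<exists>C. \<forall>\<Phi>. 0 \<le> \<Phi> \<longrightarrow>
           (\<forall>x\<in>Omega f1 f2.
              flux_norm f1 f2 \<mu> \<epsilon> \<Phi> x \<le> C * \<Phi> / (f2 (fst x) - f1 (fst x)) \<and>
              flux_grad_norm f1 f2 \<mu> \<epsilon> \<Phi> x \<le> C * \<Phi> / (f2 (fst x) - f1 (fst x))\<^sup>2) \<and>
           (\<forall>a b. a < b \<longrightarrow>
              (\<integral>\<^sup>+ x. indicator (Omega_ab f1 f2 a b) x *
                   ennreal ((flux_grad_norm f1 f2 \<mu> \<epsilon> \<Phi> x)\<^sup>2 +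
                            (flux_norm f1 f2 \<mu> \<epsilon> \<Phi> x) ^ 4) \<partial>lebesgue)
              \<le> ennreal (C * (\<Phi>\<^sup>2 + \<Phi> ^ 4)) *
                 (\<integral>\<^sup>+ t. indicator {a<..<b} t * ennreal (1 / (f2 t - f1 t) ^ 3) \<partial>lebesgue)))))"
proof -
  interpret flux_channel f1 f2 \<mu>
    using assms by unfold_locales auto
  show ?thesis
    using flux_g1_weighted_hardy flux_energy_bounds by blast
qed

end
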